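(* In the setting below, the error $e^k=\tilde q_\gamma^k-q_\gamma^k$ of the regularized block Kaczmarz method satisfies, with $\delta_\gamma=\|A^*M_\gamma(\tilde p-p)\|$: (i) if $2\le k\le 2\sigma_\gamma^{-2}$, then $\displaystyle \|e^k\|\le \frac{\delta_\gamma\sigma_\gamma^2}{2\big(1-(1-\sigma_\gamma^2)^{1/2}\big)}\,k$; (ii) if $k>2\sigma_\gamma^{-2}$, then $\displaystyle \|e^k\|\le \frac{\delta_\gamma}{1-(1-\sigma_\gamma^2)^{1/2}}$. Setting: $A_j\in\mathbb{C}^{r_j\times n}$ ($j=1,\dots,m$), $A=\begin{bmatrix}A_1\\ \vdots\\ A_m\end{bmatrix}$ of full row rank, $\gamma>0$, $D_\gamma=\operatorname{diag}(\gamma I+A_1A_1^*,\dots,\gamma I+A_mA_m^* )$, $L$ the strictly block lower triangular matrix with $(i,j)$ block $A_iA_j^*$ for $i>j$, $M_\gamma=(D_\gamma+L)^{-1}$, $R_\gamma=(D_{2\gamma})^{1/2}M_\gamma A$ ($D_{2\gamma}$ = $D_\gamma$ with $\gamma$ replaced by $2\gamma$), $\sigma_\gamma$ the smallest nonzero singular value of $R_\gamma$; $q_\gamma^k$, $\tilde q_\gamma^k$ are the iterates, starting from $0$, of $q^{k+1}=(I-A^*M_\gamma A)q^k+A^*M_\gamma p$ with data $p$, respectively $\tilde p$ (equivalently, of the regularized block Kaczmarz sweep $q_j=q_{j-1}+A_j^*(\gamma I+A_jA_j^* )^{-1}(p_j-A_jq_{j-1})$, $j=1,\dots,m$).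
   Context: $A^*$ is the conjugate transpose; norms are Euclidean / operator 2-norms; $(D_{2\gamma})^{1/2}$ is the Hermitian positive definite square root; $0<\sigma_\gamma\le1$. *)

theory Defs
  imports "Jordan_Normal_Form.Gauss_Jordan_Elimination" "Jordan_Normal_Form.Schur_Decomposition"
    "Jordan_Normal_Form.DL_Rank" "Jordan_Normal_Form.Char_Poly"
begin

(* Blocks A_1..A_m are the list As; each A_j is r_j x n. *)

definition blk_off :: "complex mat list \<Rightarrow> nat \<Rightarrow> nat" where
  "blk_off As j = sum_list (map dim_row (take j As))"

(* block index (0-based) of global row index a *)
definition blk_of :: "complex mat list \<Rightarrow> nat \<Rightarrow> nat" where
  "blk_of As a = (LEAST j. a < blk_off As (Suc j))"

definition stack_blocks :: "complex mat list \<Rightarrow> nat \<Rightarrow> complex mat" where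
  "stack_blocks As n = foldr (\<lambda>B C. B @\<^sub>r C) As (0\<^sub>m 0 n)"

definition D_mat :: "complex mat list \<Rightarrow> nat \<Rightarrow> real \<Rightarrow> complex mat" where
  "D_mat As n \<gamma> = (let A = stack_blocks As n; G = A * mat_adjoint A; N = dim_row A in
     mat N N (\<lambda>(a,b). if blk_of As a = blk_of As b
                       then (if a = b then complex_of_real \<gamma> else 0) + G $$ (a,b) else 0))"

definition L_mat :: "complex mat list \<Rightarrow> nat \<Rightarrow> complex mat" where
  "L_mat As n = (let A = stack_blocks As n; G = A * mat_adjoint A; N = dim_row A in
     mat N N (\<lambda>(a,b). if blk_of As a > blk_of As b then G $$ (a,b) else 0))"

definition M_mat :: "complex mat list \<Rightarrow> nat \<Rightarrow> real \<Rightarrow> complex mat" where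
  "M_mat As n \<gamma> = the (mat_inverse (D_mat As n \<gamma> + L_mat As n))"

definition hpd_sqrt :: "complex mat \<Rightarrow> complex mat" where
  "hpd_sqrt D = (THE S. S \<in> carrier_mat (dim_row D) (dim_row D) \<and> mat_adjoint S = S \<and>
      (\<forall>v \<in> carrier_vec (dim_row D). v \<noteq> 0\<^sub>v (dim_row D) \<longrightarrow>
          0 < Re (v \<bullet>c (S *\<^sub>v v))) \<and> S * S = D)"

definition R_mat :: "complex mat list \<Rightarrow> nat \<Rightarrow> real \<Rightarrow> complex mat" where
  "R_mat As n \<gamma> = hpd_sqrt (D_mat As n (2 * \<gamma>)) * M_mat As n \<gamma> * stack_blocks As n"

definition min_sing_val :: "complex mat \<Rightarrow> real" where
  "min_sing_val R = sqrt (Min {x::real. x \<noteq> 0 \<and> eigenvalue (mat_adjoint R * R) (complex_of_real x)})"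

definition sigma :: "complex mat list \<Rightarrow> nat \<Rightarrow> real \<Rightarrow> real" where
  "sigma As n \<gamma> = min_sing_val (R_mat As n \<gamma>)"

definition iterate_q :: "complex mat list \<Rightarrow> nat \<Rightarrow> real \<Rightarrow> complex vec \<Rightarrow> nat \<Rightarrow> complex vec" where
  "iterate_q As n \<gamma> p k = (let A = stack_blocks As n; M = M_mat As n \<gamma> in
     ((\<lambda>q. (1\<^sub>m n - mat_adjoint A * M * A) *\<^sub>v q + (mat_adjoint A * M) *\<^sub>v p) ^^ k) (0\<^sub>v n))"

definition vnorm :: "complex vec \<Rightarrow> real" where
  "vnorm v = sqrt (\<Sum>i<dim_vec v. (cmod (v $ i))\<^sup>2)"

end

theory Submission
  imports Defs "HOL-Analysis.L2_Norm" "Jordan_Normal_Form.Spectral_Radius"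
begin

text \<open>With \<open>K = D\<^sub>\<gamma> + L\<close> and \<open>G = A A\<^sup>*\<close> one has \<open>K + K\<^sup>* - G = D\<^sub>2\<^sub>\<gamma>\<close>, which yields the
  energy identity \<open>\<parallel>T x\<parallel>\<^sup>2 = \<parallel>x\<parallel>\<^sup>2 - \<parallel>R\<^sub>\<gamma> x\<parallel>\<^sup>2\<close> for the iteration matrix \<open>T = I - A\<^sup>* M\<^sub>\<gamma> A\<close>.
  Since \<open>R\<^sub>\<gamma>\<close> and \<open>A\<close> have the same kernel, the spectral theorem for \<open>R\<^sub>\<gamma>\<^sup>* R\<^sub>\<gamma>\<close> gives
  \<open>\<parallel>R\<^sub>\<gamma> x\<parallel> \<ge> \<sigma>\<^sub>\<gamma> \<parallel>x\<parallel>\<close> on the range of \<open>A\<^sup>*\<close>, so there \<open>T\<close> contracts by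
  \<open>s = (1 - \<sigma>\<^sub>\<gamma>\<^sup>2)\<^sup>1\<^sup>/\<^sup>2\<close>. The errors stay in that range and satisfy
  \<open>e\<^sup>k\<^sup>+\<^sup>1 = T e\<^sup>k + A\<^sup>* M\<^sub>\<gamma> (p\<tilde> - p)\<close>, hence \<open>\<parallel>e\<^sup>k\<parallel> \<le> \<delta>\<^sub>\<gamma> (1 + s + \<dots> + s\<^sup>k\<^sup>-\<^sup>1)\<close>, and both
  bounds follow from \<open>\<sigma>\<^sub>\<gamma>\<^sup>2 = (1 - s)(1 + s)\<close>.\<close>

section \<open>Adjoints and the complex inner product\<close>

lemma mat_adjoint_dim [simp]:
  "dim_row (mat_adjoint A) = dim_col A" "dim_col (mat_adjoint A) = dim_row A"
  unfolding mat_adjoint_def by auto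

lemma mat_adjoint_index [simp]:
  "i < dim_col A \<Longrightarrow> j < dim_row A \<Longrightarrow> mat_adjoint A $$ (i, j) = cnj (A $$ (j, i))"
  unfolding mat_adjoint_def by (simp add: mat_of_rows_index)

lemma mat_adjoint_carrier [simp, intro]: "A \<in> carrier_mat r c \<Longrightarrow> mat_adjoint A \<in> carrier_mat c r"
  by auto

lemma mat_adjoint_adjoint [simp]: "mat_adjoint (mat_adjoint (A :: complex mat)) = A"
  by (rule eq_matI) auto

lemma mat_adjoint_mult:
  fixes A B :: "complex mat"
  assumes "A \<in> carrier_mat r k" "B \<in> carrier_mat k c"
  shows "mat_adjoint (A * B) = mat_adjoint B * mat_adjoint A"
proof (rule eq_matI)
  fix i j assume "i < dim_row (mat_adjoint B * mat_adjoint A)" "j < dim_col (mat_adjoint B * mat_adjoint A)"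
  with assms show "mat_adjoint (A * B) $$ (i, j) = (mat_adjoint B * mat_adjoint A) $$ (i, j)"
    by (auto simp: scalar_prod_def cnj_sum mult.commute intro: sum.cong)
qed (use assms in auto)

lemma mat_adjoint_minus:
  fixes A B :: "complex mat"
  assumes "A \<in> carrier_mat r c" "B \<in> carrier_mat r c"
  shows "mat_adjoint (A - B) = mat_adjoint A - mat_adjoint B"
  by (rule eq_matI) (use assms in auto)

lemma mult_mat_vec_zero [simp]: "A \<in> carrier_mat r c \<Longrightarrow> A *\<^sub>v 0\<^sub>v c = 0\<^sub>v r"
  by (rule eq_vecI) auto

lemma cscalar_prod_sum: "dim_vec y = n \<Longrightarrow> x \<bullet>c y = (\<Sum>i = 0..<n. x $ i * cnj (y $ i))"
  by (simp add: scalar_prod_def)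

lemma cscalar_prod_adjoint:
  fixes A :: "complex mat"
  assumes A: "A \<in> carrier_mat r c" and x: "x \<in> carrier_vec c" and y: "y \<in> carrier_vec r"
  shows "(A *\<^sub>v x) \<bullet>c y = x \<bullet>c (mat_adjoint A *\<^sub>v y)"
proof -
  have "(A *\<^sub>v x) \<bullet>c y = (\<Sum>i = 0..<r. \<Sum>j = 0..<c. x $ j * (A $$ (i, j) * cnj (y $ i)))"
    using A x y by (simp add: cscalar_prod_sum scalar_prod_def sum_distrib_left sum_distrib_right mult_ac)
  also have "\<dots> = (\<Sum>j = 0..<c. \<Sum>i = 0..<r. x $ j * (A $$ (i, j) * cnj (y $ i)))"
    by (rule sum.swap)
  also have "\<dots> = x \<bullet>c (mat_adjoint A *\<^sub>v y)"
    using A x y by (simp add: cscalar_prod_sum scalar_prod_def sum_distrib_left cnj_sum)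
  finally show ?thesis .
qed

lemma cscalar_prod_swap:
  fixes x y :: "complex vec"
  assumes "dim_vec x = dim_vec y"
  shows "x \<bullet>c y = cnj (y \<bullet>c x)"
  using assms by (simp add: cscalar_prod_sum cnj_sum mult.commute)

lemma cscalar_prod_smult_left:
  fixes x y :: "complex vec"
  assumes "dim_vec x = dim_vec y"
  shows "(a \<cdot>\<^sub>v x) \<bullet>c y = a * (x \<bullet>c y)"
  using assms by (simp add: cscalar_prod_sum sum_distrib_left mult_ac)

lemma cscalar_prod_smult_right:
  fixes x y :: "complex vec"
  assumes "dim_vec y = dim_vec x"
  shows "x \<bullet>c (a \<cdot>\<^sub>v y) = cnj a * (x \<bullet>c y)"
  using assms by (simp add: cscalar_prod_sum sum_distrib_left mult_ac)

lemma cscalar_prod_minus_left: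
  fixes x y z :: "complex vec"
  assumes "dim_vec x = dim_vec z" "dim_vec y = dim_vec z"
  shows "(x - y) \<bullet>c z = x \<bullet>c z - y \<bullet>c z"
  using assms by (simp add: cscalar_prod_sum algebra_simps sum_subtractf)

lemma cscalar_prod_minus_right:
  fixes x y z :: "complex vec"
  assumes "dim_vec y = dim_vec x" "dim_vec z = dim_vec x"
  shows "x \<bullet>c (y - z) = x \<bullet>c y - x \<bullet>c z"
  using assms by (simp add: cscalar_prod_sum algebra_simps sum_subtractf)

lemma cscalar_prod_add_right:
  fixes x y z :: "complex vec"
  assumes "dim_vec y = dim_vec x" "dim_vec z = dim_vec x"
  shows "x \<bullet>c (y + z) = x \<bullet>c y + x \<bullet>c z"
  using assms by (simp add: cscalar_prod_sum algebra_simps sum.distrib)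

lemma cscalar_prod_diff_self:
  fixes x y :: "complex vec"
  assumes "x \<in> carrier_vec n" "y \<in> carrier_vec n"
  shows "(x - y) \<bullet>c (x - y) = x \<bullet>c x - x \<bullet>c y - y \<bullet>c x + y \<bullet>c y"
  using assms by (simp add: cscalar_prod_minus_left cscalar_prod_minus_right)

lemma mult_mat_adjoint_index:
  fixes U X :: "complex mat"
  assumes "U \<in> carrier_mat r c" "X \<in> carrier_mat r c'" "i < c" "j < c'"
  shows "(mat_adjoint U * X) $$ (i, j) = col X j \<bullet>c col U i"
  using assms by (auto simp: scalar_prod_def mult.commute intro!: sum.cong)

lemma cscalar_prod_self: "x \<bullet>c x = complex_of_real ((vnorm x)\<^sup>2)"
proof -
  have "x \<bullet>c x = (\<Sum>i = 0..<dim_vec x. complex_of_real ((cmod (x $ i))\<^sup>2))"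
    unfolding cscalar_prod_sum[OF refl] by (rule sum.cong) (simp_all only: complex_norm_square)
  then show ?thesis
    unfolding vnorm_def by (simp add: sum_nonneg atLeast0LessThan)
qed

lemma vnorm_nonneg: "vnorm x \<ge> 0"
  unfolding vnorm_def by (simp add: sum_nonneg)

lemma vnorm_eq_0_iff: "vnorm x = 0 \<longleftrightarrow> x = 0\<^sub>v (dim_vec x)"
proof -
  have "vnorm x = 0 \<longleftrightarrow> (\<forall>i<dim_vec x. (cmod (x $ i))\<^sup>2 = 0)"
    unfolding vnorm_def by (auto simp: sum_nonneg_eq_0_iff)
  then show ?thesis by (auto simp: vec_eq_iff)
qed

lemma vnorm_triangle:
  fixes x y :: "complex vec"
  assumes "dim_vec x = dim_vec y"
  shows "vnorm (x + y) \<le> vnorm x + vnorm y"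
proof -
  have norm_L2: "vnorm v = L2_set (\<lambda>i. cmod (v $ i)) {..<dim_vec v}" for v
    unfolding vnorm_def L2_set_def by simp
  have "vnorm (x + y) \<le> L2_set (\<lambda>i. cmod (x $ i) + cmod (y $ i)) {..<dim_vec x}"
    unfolding norm_L2 using assms by (auto intro!: L2_set_mono simp: norm_triangle_ineq)
  also have "\<dots> \<le> vnorm x + vnorm y"
    unfolding norm_L2 using assms by (simp add: L2_set_triangle_ineq)
  finally show ?thesis .
qed

section \<open>Unitary matrices and the spectral theorem\<close>

definition unitary :: "complex mat \<Rightarrow> nat \<Rightarrow> bool" where
  "unitary U n \<longleftrightarrow> U \<in> carrier_mat n n \<and> mat_adjoint U * U = 1\<^sub>m n \<and> U * mat_adjoint U = 1\<^sub>m n"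

abbreviation real_diag_mat :: "nat \<Rightarrow> (nat \<Rightarrow> real) \<Rightarrow> complex mat" where
  "real_diag_mat n d \<equiv> mat_diag n (\<lambda>i. complex_of_real (d i))"

lemma mat_adjoint_real_diag_mat [simp]: "mat_adjoint (real_diag_mat n d) = real_diag_mat n d"
  by (rule eq_matI) (auto simp: mat_diag_def)

lemma unitary_carrier: "unitary U n \<Longrightarrow> U \<in> carrier_mat n n"
  unfolding unitary_def by simp

lemma unitary_orthonormal_cols:
  assumes "unitary U n" "i < n" "j < n"
  shows "col U j \<bullet>c col U i = (if i = j then 1 else 0)"
  using assms mult_mat_adjoint_index[of U n n U n i j] unfolding unitary_def by auto

lemma unitary_col_nonzero:
  assumes "unitary U n" "i < n"
  shows "col U i \<noteq> 0\<^sub>v n"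
  using unitary_orthonormal_cols[OF assms assms(2)] unitary_carrier[OF assms(1)]
  by (auto simp: cscalar_prod_sum)

lemma unitaryI_orthonormal_cols:
  assumes U: "U \<in> carrier_mat n n"
    and orth: "\<And>i j. i < n \<Longrightarrow> j < n \<Longrightarrow> col U j \<bullet>c col U i = (if i = j then 1 else 0)"
  shows "unitary U n"
proof -
  have "mat_adjoint U * U = 1\<^sub>m n"
  proof (rule eq_matI)
    fix i j assume "i < dim_row (1\<^sub>m n)" "j < dim_col (1\<^sub>m n)"
    then show "(mat_adjoint U * U) $$ (i, j) = 1\<^sub>m n $$ (i, j)"
      by (subst mult_mat_adjoint_index[OF U U]) (auto simp: orth)
  qed (use U in auto)
  with mat_mult_left_right_inverse[OF _ U this] U show ?thesis
    unfolding unitary_def by auto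
qed

lemma unitary_mult:
  assumes U: "unitary U n" and V: "unitary V n"
  shows "unitary (U * V) n"
proof -
  have Uc: "U \<in> carrier_mat n n" and Vc: "V \<in> carrier_mat n n"
    using U V by (simp_all add: unitary_carrier)
  have "mat_adjoint (U * V) * (U * V) = mat_adjoint V * ((mat_adjoint U * U) * V)"
    using Uc Vc by (simp add: mat_adjoint_mult assoc_mult_mat[of _ n n _ n _ n])
  also have "\<dots> = 1\<^sub>m n"
    using U V Vc unfolding unitary_def by simp
  finally have "mat_adjoint (U * V) * (U * V) = 1\<^sub>m n" .
  with mat_mult_left_right_inverse[OF _ _ this] Uc Vc show ?thesis
    unfolding unitary_def by auto
qed

lemma unitary_eigenvector_col:
  assumes U: "unitary U n" and H: "H \<in> carrier_mat n n"
    and HU: "H * U = U * real_diag_mat n d" and i: "i < n"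
  shows "H *\<^sub>v col U i = complex_of_real (d i) \<cdot>\<^sub>v col U i"
proof -
  have Uc: "U \<in> carrier_mat n n" using U by (rule unitary_carrier)
  have "H *\<^sub>v col U i = col (H * U) i" by (rule col_mult2[OF H Uc i, symmetric])
  also have "\<dots> = complex_of_real (d i) \<cdot>\<^sub>v col U i"
    unfolding HU mat_diag_mult_right[OF Uc] using Uc i by (auto simp: mult.commute)
  finally show ?thesis .
qed

lemma unitary_normalized_cols:
  assumes ws: "corthogonal ws" "set ws \<subseteq> carrier_vec n" "length ws = n"
  defines "U \<equiv> mat_of_cols n (map (\<lambda>w. complex_of_real (1 / vnorm w) \<cdot>\<^sub>v w) ws)"
  shows "unitary U n"
    and "\<And>i. i < n \<Longrightarrow> col U i = complex_of_real (1 / vnorm (ws ! i)) \<cdot>\<^sub>v ws ! i"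
proof -
  show colU: "col U i = complex_of_real (1 / vnorm (ws ! i)) \<cdot>\<^sub>v ws ! i" if "i < n" for i
    unfolding U_def using that ws by (subst col_mat_of_cols) auto
  show "unitary U n"
  proof (rule unitaryI_orthonormal_cols)
    show "U \<in> carrier_mat n n" unfolding U_def using ws(3) by auto
    fix i j assume ij: "i < n" "j < n"
    have w: "ws ! i \<in> carrier_vec n" "ws ! j \<in> carrier_vec n" using ws ij by auto
    have "col U j \<bullet>c col U i = complex_of_real (1 / vnorm (ws ! j))
        * cnj (complex_of_real (1 / vnorm (ws ! i))) * (ws ! j \<bullet>c ws ! i)"
      using w by (simp add: colU ij cscalar_prod_smult_left cscalar_prod_smult_right)
    also have "\<dots> = (if i = j then 1 else 0)"
    proof (cases "i = j")
      case True
      have "ws ! j \<bullet>c ws ! j \<noteq> 0" using corthogonalD[OF ws(1), of j j] ij ws(3) by auto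
      then have "vnorm (ws ! j) \<noteq> 0" by (simp add: cscalar_prod_self)
      then show ?thesis
        using True by (simp add: cscalar_prod_self power2_eq_square flip: of_real_mult)
    next
      case False
      then show ?thesis using corthogonalD[OF ws(1), of j i] ij ws(3) by auto
    qed
    finally show "col U j \<bullet>c col U i = (if i = j then 1 else 0)" .
  qed
qed

lemma exists_unitary_first_col:
  assumes v: "v \<in> carrier_vec n" "v \<noteq> 0\<^sub>v n"
  shows "\<exists>U c. unitary U n \<and> col U 0 = c \<cdot>\<^sub>v v"
proof -
  interpret cof_vec_space n "TYPE(complex)" .
  define b where "b = basis_completion v"
  from basis_completion[OF v, folded b_def]
  have b: "set b \<subseteq> carrier_vec n" "distinct b" "\<not> lin_dep (set b)" "length b = n" "hd b = v"
    by auto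
  define ws where "ws = gram_schmidt n b"
  from gram_schmidt_result[OF b(1-3) ws_def]
  have ws: "corthogonal ws" "set ws \<subseteq> carrier_vec n" "length ws = n"
    using b by auto
  have n: "0 < n" using v by (cases n) auto
  obtain vs where "b = v # vs" using b(4,5) n by (cases b) auto
  then have "hd ws = v" unfolding ws_def using v(1) by simp
  then have "ws ! 0 = v" using ws(3) n by (cases ws) auto
  then show ?thesis using unitary_normalized_cols[OF ws] n by metis
qed

lemma unitary_border:
  assumes V: "unitary V m"
  defines "W \<equiv> mat (Suc m) (Suc m)
    (\<lambda>(i, j). if i = 0 \<or> j = 0 then (if i = j then 1 else 0) else V $$ (i - 1, j - 1))"
  shows "unitary W (Suc m)"
proof (rule unitaryI_orthonormal_cols)
  show "W \<in> carrier_mat (Suc m) (Suc m)" unfolding W_def by simp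
  fix i j assume ij: "i < Suc m" "j < Suc m"
  have "col W j \<bullet>c col W i
      = W $$ (0, j) * cnj (W $$ (0, i)) + (\<Sum>k = 0..<m. W $$ (Suc k, j) * cnj (W $$ (Suc k, i)))"
    using ij unfolding W_def
    by (simp add: cscalar_prod_sum sum.atLeast0_lessThan_Suc_shift del: sum.op_ivl_Suc)
  also have "\<dots> = (if i = j then 1 else 0)"
  proof (cases "i = 0 \<or> j = 0")
    case True
    then show ?thesis using ij by (auto simp: W_def)
  next
    case False
    then obtain i' j' where i': "i = Suc i'" "i' < m" and j': "j = Suc j'" "j' < m"
      using ij by (cases i; cases j) auto
    have "(\<Sum>k = 0..<m. W $$ (Suc k, j) * cnj (W $$ (Suc k, i))) = col V j' \<bullet>c col V i'"
      using i' j' unitary_carrier[OF V] by (auto simp: W_def cscalar_prod_sum intro: sum.cong)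
    then show ?thesis using i' j' unitary_orthonormal_cols[OF V i'(2) j'(2)] by (simp add: W_def)
  qed
  finally show "col W j \<bullet>c col W i = (if i = j then 1 else 0)" .
qed

lemma bordered_diagonalization:
  fixes B :: "complex mat" and e :: real
  assumes B: "B \<in> carrier_mat (Suc m) (Suc m)"
    and first_col: "\<And>i. i < Suc m \<Longrightarrow> B $$ (i, 0) = (if i = 0 then complex_of_real e else 0)"
    and first_row: "\<And>j. j < Suc m \<Longrightarrow> B $$ (0, j) = (if j = 0 then complex_of_real e else 0)"
    and V: "unitary V m"
    and BV: "mat m m (\<lambda>(i, j). B $$ (Suc i, Suc j)) * V = V * real_diag_mat m d"
  shows "\<exists>W d'. unitary W (Suc m) \<and> B * W = W * real_diag_mat (Suc m) d'"
proof (intro exI conjI)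
  define W where "W = mat (Suc m) (Suc m)
    (\<lambda>(i, j). if i = 0 \<or> j = 0 then (if i = j then 1 else 0) else V $$ (i - 1, j - 1))"
  define d' where "d' j = (if j = 0 then e else d (j - 1))" for j
  show "unitary W (Suc m)" unfolding W_def by (rule unitary_border[OF V])
  have Vc: "V \<in> carrier_mat m m" using V by (rule unitary_carrier)
  have W: "W \<in> carrier_mat (Suc m) (Suc m)" unfolding W_def by simp
  show "B * W = W * real_diag_mat (Suc m) d'"
  proof (rule eq_matI)
    fix i j assume "i < dim_row (W * real_diag_mat (Suc m) d')" "j < dim_col (W * real_diag_mat (Suc m) d')"
    then have i: "i < Suc m" and j: "j < Suc m" by (auto simp: W_def mat_diag_def)
    have "(B * W) $$ (i, j)
        = B $$ (i, 0) * W $$ (0, j) + (\<Sum>k = 0..<m. B $$ (i, Suc k) * W $$ (Suc k, j))"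
      using B W i j by (simp add: scalar_prod_def sum.atLeast0_lessThan_Suc_shift del: sum.op_ivl_Suc)
    also have "\<dots> = W $$ (i, j) * complex_of_real (d' j)"
    proof (cases "i = 0 \<or> j = 0")
      case True
      then show ?thesis using i j by (auto simp: first_col first_row W_def d'_def)
    next
      case False
      then obtain i' j' where i': "i = Suc i'" "i' < m" and j': "j = Suc j'" "j' < m"
        using i j by (cases i; cases j) auto
      have "(\<Sum>k = 0..<m. B $$ (i, Suc k) * W $$ (Suc k, j))
          = (mat m m (\<lambda>(i, j). B $$ (Suc i, Suc j)) * V) $$ (i', j')"
        using i' j' Vc by (auto simp: W_def scalar_prod_def intro: sum.cong)
      also have "\<dots> = V $$ (i', j') * complex_of_real (d j')"
        unfolding BV mat_diag_mult_right[OF Vc] using i' j' by simp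
      finally show ?thesis using i' j' first_col by (simp add: W_def d'_def)
    qed
    also have "\<dots> = (W * real_diag_mat (Suc m) d') $$ (i, j)"
      unfolding mat_diag_mult_right[OF W] using i j by simp
    finally show "(B * W) $$ (i, j) = (W * real_diag_mat (Suc m) d') $$ (i, j)" .
  qed (use B W in \<open>auto simp: mat_diag_def\<close>)
qed

lemma unitary_deflation:
  fixes H U :: "complex mat"
  assumes H: "H \<in> carrier_mat n n" "mat_adjoint H = H" and U: "unitary U n"
    and HU0: "H *\<^sub>v col U 0 = e \<cdot>\<^sub>v col U 0" and n: "0 < n"
  defines "B \<equiv> mat_adjoint U * (H * U)"
  shows "B \<in> carrier_mat n n" "mat_adjoint B = B" "H * U = U * B"
    and "\<And>i. i < n \<Longrightarrow> B $$ (i, 0) = (if i = 0 then e else 0)"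
proof -
  have Uc: "U \<in> carrier_mat n n" using U by (rule unitary_carrier)
  show "B \<in> carrier_mat n n" unfolding B_def using H Uc by auto
  show "mat_adjoint B = B"
    unfolding B_def using H Uc
    by (simp add: mat_adjoint_mult[OF mat_adjoint_carrier[OF Uc] mult_carrier_mat[OF H(1) Uc]]
        mat_adjoint_mult[OF H(1) Uc] assoc_mult_mat[of _ n n _ n _ n])
  have "U * B = (U * mat_adjoint U) * (H * U)"
    unfolding B_def by (rule assoc_mult_mat[symmetric]) (use Uc H in auto)
  then show "H * U = U * B" using U H unfolding unitary_def by simp
  fix i assume i: "i < n"
  have "B $$ (i, 0) = (H *\<^sub>v col U 0) \<bullet>c col U i"
    unfolding B_def mult_mat_adjoint_index[OF Uc mult_carrier_mat[OF H(1) Uc] i n]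
      col_mult2[OF H(1) Uc n] ..
  then show "B $$ (i, 0) = (if i = 0 then e else 0)"
    using Uc i n unitary_orthonormal_cols[OF U i n] by (simp add: HU0 cscalar_prod_smult_left)
qed

lemma hermitian_first_col:
  fixes B :: "complex mat"
  assumes B: "B \<in> carrier_mat (Suc m) (Suc m)" "mat_adjoint B = B"
    and col: "\<And>i. i < Suc m \<Longrightarrow> B $$ (i, 0) = (if i = 0 then c else 0)"
  shows "\<And>i. i < Suc m \<Longrightarrow> B $$ (i, 0) = (if i = 0 then complex_of_real (Re c) else 0)"
    and "\<And>j. j < Suc m \<Longrightarrow> B $$ (0, j) = (if j = 0 then complex_of_real (Re c) else 0)"
    and "mat_adjoint (mat m m (\<lambda>(i, j). B $$ (Suc i, Suc j))) = mat m m (\<lambda>(i, j). B $$ (Suc i, Suc j))"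
proof -
  have conj: "B $$ (i, j) = cnj (B $$ (j, i))" if "i < Suc m" "j < Suc m" for i j
    using that B mat_adjoint_index[of i B j] by simp
  have "cnj c = c" using conj[of 0 0] col[of 0] by simp
  then have c: "complex_of_real (Re c) = c" by (simp add: complex_eq_iff)
  show col': "B $$ (i, 0) = (if i = 0 then complex_of_real (Re c) else 0)" if "i < Suc m" for i
    using col[OF that] by (simp add: c)
  show "B $$ (0, j) = (if j = 0 then complex_of_real (Re c) else 0)" if "j < Suc m" for j
    using conj[of 0 j] col'[OF that] that by (cases "j = 0") auto
  show "mat_adjoint (mat m m (\<lambda>(i, j). B $$ (Suc i, Suc j))) = mat m m (\<lambda>(i, j). B $$ (Suc i, Suc j))"
  proof (rule eq_matI)
    fix i j assume "i < dim_row (mat m m (\<lambda>(i, j). B $$ (Suc i, Suc j)))"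
      "j < dim_col (mat m m (\<lambda>(i, j). B $$ (Suc i, Suc j)))"
    then show "mat_adjoint (mat m m (\<lambda>(i, j). B $$ (Suc i, Suc j))) $$ (i, j)
        = mat m m (\<lambda>(i, j). B $$ (Suc i, Suc j)) $$ (i, j)"
      using conj[of "Suc i" "Suc j"] by simp
  qed simp_all
qed

theorem hermitian_spectral_decomposition:
  fixes H :: "complex mat"
  assumes "H \<in> carrier_mat n n" "mat_adjoint H = H"
  shows "\<exists>U d. unitary U n \<and> H * U = U * real_diag_mat n d"
  using assms
proof (induction n arbitrary: H)
  case 0
  then show ?case
    by (intro exI[of _ "1\<^sub>m 0"] exI[of _ "\<lambda>_. 0"]) (auto simp: unitary_def mat_diag_def intro!: eq_matI)
next
  case (Suc m)
  have H: "H \<in> carrier_mat (Suc m) (Suc m)" and herm: "mat_adjoint H = H" by fact+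
  obtain e where "eigenvalue H e"
    using spectrum_non_empty[OF H] unfolding spectrum_def by auto
  then obtain v where "eigenvector H v e" unfolding eigenvalue_def by blast
  then have v: "v \<in> carrier_vec (Suc m)" "v \<noteq> 0\<^sub>v (Suc m)" "H *\<^sub>v v = e \<cdot>\<^sub>v v"
    unfolding eigenvector_def using H by auto
  obtain U c where U: "unitary U (Suc m)" and U0: "col U 0 = c \<cdot>\<^sub>v v"
    using exists_unitary_first_col[OF v(1,2)] by blast
  have Uc: "U \<in> carrier_mat (Suc m) (Suc m)" using U by (rule unitary_carrier)
  have HU0: "H *\<^sub>v col U 0 = e \<cdot>\<^sub>v col U 0"
    unfolding U0 using H v by (simp add: mult_mat_vec smult_smult_assoc mult.commute)
  define B where "B = mat_adjoint U * (H * U)"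
  note B = unitary_deflation[OF H herm U HU0 zero_less_Suc, folded B_def]
  note B_first = hermitian_first_col[OF B(1,2) B(4)]
  obtain V d where V: "unitary V m"
    and "mat m m (\<lambda>(i, j). B $$ (Suc i, Suc j)) * V = V * real_diag_mat m d"
    using Suc.IH[OF _ B_first(3)] by auto
  then obtain W d' where W: "unitary W (Suc m)" and BW: "B * W = W * real_diag_mat (Suc m) d'"
    using bordered_diagonalization[OF B(1) B_first(1,2)] by blast
  have Wc: "W \<in> carrier_mat (Suc m) (Suc m)" using W by (rule unitary_carrier)
  have "H * (U * W) = (H * U) * W"
    by (rule assoc_mult_mat[symmetric]) (use H Uc Wc in auto)
  also have "\<dots> = U * (B * W)"
    unfolding B(3) by (rule assoc_mult_mat) (use Uc B(1) Wc in auto)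
  also have "\<dots> = (U * W) * real_diag_mat (Suc m) d'"
    unfolding BW by (rule assoc_mult_mat[OF Uc Wc mat_diag_dim, symmetric])
  finally show ?case using unitary_mult[OF U W] by blast
qed

lemma unitary_adjoint_mult_vec:
  assumes "unitary U n" "x \<in> carrier_vec n"
  shows "U *\<^sub>v (mat_adjoint U *\<^sub>v x) = x"
proof -
  have U: "U \<in> carrier_mat n n" using assms(1) by (rule unitary_carrier)
  have "U *\<^sub>v (mat_adjoint U *\<^sub>v x) = (U * mat_adjoint U) *\<^sub>v x"
    by (rule assoc_mult_mat_vec[symmetric]) (use U assms(2) in auto)
  then show ?thesis using assms unfolding unitary_def by simp
qed

lemma mat_adjoint_mult_vec_index:
  fixes U :: "complex mat"
  assumes "U \<in> carrier_mat n n" "x \<in> carrier_vec n" "i < n"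
  shows "(mat_adjoint U *\<^sub>v x) $ i = x \<bullet>c col U i"
  using assms by (auto simp: scalar_prod_def mult.commute intro!: sum.cong)

lemma mat_diag_mult_vec_index:
  assumes "v \<in> carrier_vec n" "i < n"
  shows "(mat_diag n f *\<^sub>v v) $ i = f i * v $ i"
proof -
  have "(mat_diag n f *\<^sub>v v) $ i = (\<Sum>k = 0..<n. (if i = k then f k else 0) * v $ k)"
    using assms by (simp add: mat_diag_def scalar_prod_def)
  also have "\<dots> = (\<Sum>k = 0..<n. if k = i then f i * v $ k else 0)"
    by (rule sum.cong) auto
  finally show ?thesis using assms by simp
qed

lemma spectral_decomposition:
  assumes "unitary U n" "H \<in> carrier_mat n n" "H * U = U * real_diag_mat n d"
  shows "H = U * real_diag_mat n d * mat_adjoint U"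
proof -
  have U: "U \<in> carrier_mat n n" using assms(1) by (rule unitary_carrier)
  have "H = H * (U * mat_adjoint U)" using assms unfolding unitary_def by simp
  also have "\<dots> = (H * U) * mat_adjoint U"
    by (rule assoc_mult_mat[symmetric]) (use U assms(2) in auto)
  finally show ?thesis using assms by simp
qed

lemma spectral_coordinates:
  assumes U: "unitary U n" and H: "H \<in> carrier_mat n n"
    and HU: "H * U = U * real_diag_mat n d" and x: "x \<in> carrier_vec n"
  defines "z \<equiv> mat_adjoint U *\<^sub>v x"
  shows "(vnorm x)\<^sup>2 = (\<Sum>i<n. (cmod (z $ i))\<^sup>2)"
    and "(H *\<^sub>v x) \<bullet>c x = complex_of_real (\<Sum>i<n. d i * (cmod (z $ i))\<^sup>2)"
proof -
  have Uc: "U \<in> carrier_mat n n" using U by (rule unitary_carrier)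
  have z: "z \<in> carrier_vec n" unfolding z_def using mat_adjoint_carrier[OF Uc] x by simp
  have xz: "x = U *\<^sub>v z" unfolding z_def using unitary_adjoint_mult_vec[OF U x] by simp
  have preserve: "(U *\<^sub>v a) \<bullet>c (U *\<^sub>v z) = a \<bullet>c z" if a: "a \<in> carrier_vec n" for a
  proof -
    have "(U *\<^sub>v a) \<bullet>c (U *\<^sub>v z) = a \<bullet>c ((mat_adjoint U * U) *\<^sub>v z)"
      using Uc a z by (simp add: cscalar_prod_adjoint assoc_mult_mat_vec[OF mat_adjoint_carrier[OF Uc] Uc z])
    then show ?thesis using U z unfolding unitary_def by simp
  qed
  have "complex_of_real ((vnorm x)\<^sup>2) = complex_of_real ((vnorm z)\<^sup>2)"
    using preserve[OF z] unfolding xz cscalar_prod_self by simp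
  then show "(vnorm x)\<^sup>2 = (\<Sum>i<n. (cmod (z $ i))\<^sup>2)"
    using z unfolding of_real_eq_iff vnorm_def by (simp add: sum_nonneg)
  have "H *\<^sub>v x = U *\<^sub>v (real_diag_mat n d *\<^sub>v z)"
    unfolding xz using H Uc z
    by (simp add: assoc_mult_mat_vec[symmetric] HU assoc_mult_mat_vec[OF Uc mat_diag_dim z])
  then have "(H *\<^sub>v x) \<bullet>c x = (real_diag_mat n d *\<^sub>v z) \<bullet>c z"
    using preserve[of "real_diag_mat n d *\<^sub>v z"] xz mult_mat_vec_carrier[OF mat_diag_dim z] by simp
  also have "\<dots> = (\<Sum>i = 0..<n. complex_of_real (d i) * z $ i * cnj (z $ i))"
    using z by (simp add: cscalar_prod_sum mat_diag_mult_vec_index)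
  also have "\<dots> = (\<Sum>i = 0..<n. complex_of_real (d i * (cmod (z $ i))\<^sup>2))"
    by (rule sum.cong) (simp_all only: of_real_mult complex_norm_square mult.assoc)
  finally show "(H *\<^sub>v x) \<bullet>c x = complex_of_real (\<Sum>i<n. d i * (cmod (z $ i))\<^sup>2)"
    by (simp add: atLeast0LessThan)
qed

lemma hermitian_eq_zero_if_eigenvalues_zero:
  fixes X :: "complex mat"
  assumes X: "X \<in> carrier_mat n n" and herm: "mat_adjoint X = X"
    and eig: "\<And>w \<mu>. w \<in> carrier_vec n \<Longrightarrow> w \<noteq> 0\<^sub>v n \<Longrightarrow> X *\<^sub>v w = complex_of_real \<mu> \<cdot>\<^sub>v w \<Longrightarrow> \<mu> = 0"
  shows "X = 0\<^sub>m n n"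
proof -
  obtain U d where U: "unitary U n" and XU: "X * U = U * real_diag_mat n d"
    using hermitian_spectral_decomposition[OF X herm] by blast
  have Uc: "U \<in> carrier_mat n n" using U by (rule unitary_carrier)
  have "d i = 0" if "i < n" for i
    using eig[OF _ unitary_col_nonzero[OF U that] unitary_eigenvector_col[OF U X XU that]] Uc that
    by auto
  then have "real_diag_mat n d = 0\<^sub>m n n" by (auto simp: mat_diag_def intro!: eq_matI)
  then show ?thesis using spectral_decomposition[OF U X XU] Uc by simp
qed

section \<open>Hermitian positive definite square roots\<close>

definition is_hpd_sqrt :: "complex mat \<Rightarrow> complex mat \<Rightarrow> bool" where
  "is_hpd_sqrt D S \<longleftrightarrow> S \<in> carrier_mat (dim_row D) (dim_row D) \<and> mat_adjoint S = S \<and>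
     (\<forall>v \<in> carrier_vec (dim_row D). v \<noteq> 0\<^sub>v (dim_row D) \<longrightarrow> 0 < Re (v \<bullet>c (S *\<^sub>v v))) \<and> S * S = D"

lemma hpd_sqrt_eq_The: "hpd_sqrt D = (THE S. is_hpd_sqrt D S)"
  unfolding hpd_sqrt_def is_hpd_sqrt_def by simp

lemma hpd_sqrt_difference_eigenvalue:
  assumes S1: "is_hpd_sqrt D S1" and S2: "is_hpd_sqrt D S2"
    and w: "w \<in> carrier_vec (dim_row D)" "w \<noteq> 0\<^sub>v (dim_row D)"
    and eig: "(S1 - S2) *\<^sub>v w = complex_of_real \<mu> \<cdot>\<^sub>v w"
  shows "\<mu> = 0"
proof -
  let ?n = "dim_row D"
  have sq: "(S *\<^sub>v w) \<bullet>c (S *\<^sub>v w) = w \<bullet>c (D *\<^sub>v w)" if S: "is_hpd_sqrt D S" for S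
  proof -
    have Sc: "S \<in> carrier_mat ?n ?n" and "mat_adjoint S = S" "S * S = D"
      using S unfolding is_hpd_sqrt_def by auto
    then show ?thesis
      using w by (simp add: cscalar_prod_adjoint[OF Sc] assoc_mult_mat_vec[OF Sc Sc, symmetric])
  qed
  have pos: "0 < Re (w \<bullet>c (S *\<^sub>v w))" if "is_hpd_sqrt D S" for S
    using that w unfolding is_hpd_sqrt_def by auto
  define a where "a = S1 *\<^sub>v w"
  define b where "b = S2 *\<^sub>v w"
  have S1c: "S1 \<in> carrier_mat ?n ?n" and S2c: "S2 \<in> carrier_mat ?n ?n"
    using S1 S2 unfolding is_hpd_sqrt_def by auto
  have a: "a \<in> carrier_vec ?n" and b: "b \<in> carrier_vec ?n"
    unfolding a_def b_def using S1c S2c w by auto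
  have ab: "a - b = complex_of_real \<mu> \<cdot>\<^sub>v w"
    unfolding a_def b_def using eig S1c S2c w by (simp add: minus_mult_distrib_mat_vec)
  have "complex_of_real \<mu> * (a \<bullet>c w + w \<bullet>c b) = a \<bullet>c (a - b) + (a - b) \<bullet>c b"
    unfolding ab using a b w
    by (simp add: cscalar_prod_smult_left cscalar_prod_smult_right distrib_left)
  also have "\<dots> = a \<bullet>c a - b \<bullet>c b"
    using a b by (simp add: cscalar_prod_minus_left cscalar_prod_minus_right carrier_vecD)
  also have "\<dots> = 0" unfolding a_def b_def by (simp add: sq[OF S1] sq[OF S2])
  finally have "\<mu> * (Re (a \<bullet>c w) + Re (w \<bullet>c b)) = 0"
    using arg_cong[of _ _ Re] by fastforce
  moreover have "Re (a \<bullet>c w) = Re (w \<bullet>c a)"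
    using cscalar_prod_swap[of a w] a w by simp
  ultimately show ?thesis
    using pos[OF S1] pos[OF S2] unfolding a_def b_def by (smt (verit) mult_eq_0_iff)
qed

lemma is_hpd_sqrt_unique:
  assumes S1: "is_hpd_sqrt D S1" and S2: "is_hpd_sqrt D S2"
  shows "S1 = S2"
proof -
  let ?n = "dim_row D"
  have S1c: "S1 \<in> carrier_mat ?n ?n" and S2c: "S2 \<in> carrier_mat ?n ?n"
    and "mat_adjoint S1 = S1" "mat_adjoint S2 = S2"
    using S1 S2 unfolding is_hpd_sqrt_def by auto
  then have "mat_adjoint (S1 - S2) = S1 - S2" by (simp add: mat_adjoint_minus)
  then have "S1 - S2 = 0\<^sub>m ?n ?n"
    by (intro hermitian_eq_zero_if_eigenvalues_zero hpd_sqrt_difference_eigenvalue[OF S1 S2])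
      (use S1c S2c in auto)
  show ?thesis
  proof (rule eq_matI)
    fix i j assume ij: "i < dim_row S2" "j < dim_col S2"
    then have "(S1 - S2) $$ (i, j) = 0" using \<open>S1 - S2 = 0\<^sub>m ?n ?n\<close> S2c by simp
    then show "S1 $$ (i, j) = S2 $$ (i, j)" using ij S1c S2c by simp
  qed (use S1c S2c in auto)
qed

lemma pos_def_diag_entries_pos:
  assumes U: "unitary U n" and D: "D \<in> carrier_mat n n" and DU: "D * U = U * real_diag_mat n d"
    and pd: "\<And>v. v \<in> carrier_vec n \<Longrightarrow> v \<noteq> 0\<^sub>v n \<Longrightarrow> 0 < Re (v \<bullet>c (D *\<^sub>v v))"
    and i: "i < n"
  shows "0 < d i"
proof -
  have Uc: "U \<in> carrier_mat n n" using U by (rule unitary_carrier)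
  have "col U i \<bullet>c (D *\<^sub>v col U i) = complex_of_real (d i)"
    using unitary_orthonormal_cols[OF U i i] Uc i
    by (simp add: unitary_eigenvector_col[OF U D DU i] cscalar_prod_smult_right)
  then show ?thesis using pd[OF _ unitary_col_nonzero[OF U i]] Uc i by simp
qed

lemma pos_diag_entries_pos_def:
  assumes U: "unitary U n" and S: "S \<in> carrier_mat n n" and SU: "S * U = U * real_diag_mat n e"
    and pos: "\<And>i. i < n \<Longrightarrow> 0 < e i"
    and v: "v \<in> carrier_vec n" "v \<noteq> 0\<^sub>v n"
  shows "0 < Re (v \<bullet>c (S *\<^sub>v v))"
proof -
  define z where "z = mat_adjoint U *\<^sub>v v"
  note coords = spectral_coordinates[OF U S SU v(1), folded z_def]
  have "0 < (vnorm v)\<^sup>2" using v vnorm_eq_0_iff[of v] vnorm_nonneg[of v] by auto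
  then obtain i where i: "i < n" "0 < (cmod (z $ i))\<^sup>2"
    unfolding coords(1) by (metis (no_types, lifting) lessThan_iff not_less sum_nonpos)
  have "Re (v \<bullet>c (S *\<^sub>v v)) = (\<Sum>i<n. e i * (cmod (z $ i))\<^sup>2)"
    using coords(2) cscalar_prod_swap[of v "S *\<^sub>v v"] S v by simp
  also have "\<dots> > 0"
    using i pos by (intro sum_pos2[of _ i]) (auto simp: less_imp_le)
  finally show ?thesis .
qed

lemma is_hpd_sqrt_exists:
  fixes D :: "complex mat"
  assumes D: "D \<in> carrier_mat n n" and herm: "mat_adjoint D = D"
    and pd: "\<And>v. v \<in> carrier_vec n \<Longrightarrow> v \<noteq> 0\<^sub>v n \<Longrightarrow> 0 < Re (v \<bullet>c (D *\<^sub>v v))"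
  shows "\<exists>S. is_hpd_sqrt D S"
proof -
  obtain U d where U: "unitary U n" and DU: "D * U = U * real_diag_mat n d"
    using hermitian_spectral_decomposition[OF D herm] by blast
  have Uc: "U \<in> carrier_mat n n" and UU: "mat_adjoint U * U = 1\<^sub>m n"
    using U unfolding unitary_def by auto
  note d_pos = pos_def_diag_entries_pos[OF U D DU pd]
  define e where "e i = sqrt (d i)" for i
  define S where "S = U * real_diag_mat n e * mat_adjoint U"
  have S: "S \<in> carrier_mat n n" unfolding S_def using Uc by auto
  have E: "real_diag_mat n e \<in> carrier_mat n n" by simp
  have UE: "U * real_diag_mat n e \<in> carrier_mat n n" using Uc by simp
  have SU: "S * U = U * real_diag_mat n e"
    unfolding S_def using assoc_mult_mat[OF UE mat_adjoint_carrier[OF Uc] Uc] UU UE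
    by (simp add: right_mult_one_mat[OF UE])
  have "mat_adjoint S = U * (real_diag_mat n e * mat_adjoint U)"
    unfolding S_def mat_adjoint_mult[OF UE mat_adjoint_carrier[OF Uc]] mat_adjoint_mult[OF Uc E]
    by simp
  then have "mat_adjoint S = S"
    unfolding S_def by (simp add: assoc_mult_mat[OF Uc E mat_adjoint_carrier[OF Uc]])
  moreover have "S * S = D"
  proof -
    have "real_diag_mat n e * real_diag_mat n e = real_diag_mat n d"
      unfolding mat_diag_diag using d_pos
      by (auto simp: e_def mat_diag_def less_imp_le simp flip: of_real_mult intro!: eq_matI)
    then have "S * (U * real_diag_mat n e) = U * real_diag_mat n d"
      using assoc_mult_mat[OF S Uc E, symmetric] SU assoc_mult_mat[OF Uc E E] by simp
    then show ?thesis
      unfolding spectral_decomposition[OF U D DU]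
      using assoc_mult_mat[OF S UE mat_adjoint_carrier[OF Uc], symmetric] by (simp add: S_def)
  qed
  moreover have "\<forall>v \<in> carrier_vec n. v \<noteq> 0\<^sub>v n \<longrightarrow> 0 < Re (v \<bullet>c (S *\<^sub>v v))"
    using pos_diag_entries_pos_def[OF U S SU] d_pos by (simp add: e_def)
  ultimately show ?thesis using S D unfolding is_hpd_sqrt_def by auto
qed

lemma is_hpd_sqrt_hpd_sqrt:
  fixes D :: "complex mat"
  assumes "D \<in> carrier_mat n n" "mat_adjoint D = D"
    and "\<And>v. v \<in> carrier_vec n \<Longrightarrow> v \<noteq> 0\<^sub>v n \<Longrightarrow> 0 < Re (v \<bullet>c (D *\<^sub>v v))"
  shows "is_hpd_sqrt D (hpd_sqrt D)"
  unfolding hpd_sqrt_eq_The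
  using is_hpd_sqrt_exists[OF assms] is_hpd_sqrt_unique by (blast intro: theI)

section \<open>The smallest nonzero singular value\<close>

definition nonzero_gram_eigenvalues :: "complex mat \<Rightarrow> real set" where
  "nonzero_gram_eigenvalues R = {x. x \<noteq> 0 \<and> eigenvalue (mat_adjoint R * R) (complex_of_real x)}"

lemma min_sing_val_eq: "min_sing_val R = sqrt (Min (nonzero_gram_eigenvalues R))"
  unfolding min_sing_val_def nonzero_gram_eigenvalues_def ..

lemma gram_quadratic_form:
  assumes R: "R \<in> carrier_mat N n" and x: "x \<in> carrier_vec n"
  shows "((mat_adjoint R * R) *\<^sub>v x) \<bullet>c x = complex_of_real ((vnorm (R *\<^sub>v x))\<^sup>2)"
proof -
  have "(mat_adjoint R * R) *\<^sub>v x = mat_adjoint R *\<^sub>v (R *\<^sub>v x)"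
    using R x by (simp add: assoc_mult_mat_vec[OF mat_adjoint_carrier[OF R] R x])
  then show ?thesis
    using R x by (simp add: cscalar_prod_adjoint[OF mat_adjoint_carrier[OF R]] cscalar_prod_self)
qed

lemma nonzero_gram_eigenvalue_rayleigh:
  assumes R: "R \<in> carrier_mat N n" and \<mu>: "\<mu> \<in> nonzero_gram_eigenvalues R"
  obtains v where "v \<in> carrier_vec n" "v \<noteq> 0\<^sub>v n" "\<mu> * (vnorm v)\<^sup>2 = (vnorm (R *\<^sub>v v))\<^sup>2"
proof -
  have H: "mat_adjoint R * R \<in> carrier_mat n n" using R by auto
  obtain v where v: "v \<in> carrier_vec n" "v \<noteq> 0\<^sub>v n"
    and Hv: "(mat_adjoint R * R) *\<^sub>v v = complex_of_real \<mu> \<cdot>\<^sub>v v"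
    using \<mu> H unfolding nonzero_gram_eigenvalues_def eigenvalue_def eigenvector_def by auto
  have "complex_of_real \<mu> * (v \<bullet>c v) = complex_of_real ((vnorm (R *\<^sub>v v))\<^sup>2)"
    using gram_quadratic_form[OF R v(1)] v(1) by (simp add: Hv cscalar_prod_smult_left)
  then have "complex_of_real (\<mu> * (vnorm v)\<^sup>2) = complex_of_real ((vnorm (R *\<^sub>v v))\<^sup>2)"
    by (simp only: cscalar_prod_self of_real_mult)
  then show ?thesis using that v by (simp only: of_real_eq_iff)
qed

lemma nonzero_gram_eigenvalue_pos:
  assumes "R \<in> carrier_mat N n" "\<mu> \<in> nonzero_gram_eigenvalues R"
  shows "0 < \<mu>"
proof -
  obtain v where v: "v \<in> carrier_vec n" "v \<noteq> 0\<^sub>v n" "\<mu> * (vnorm v)\<^sup>2 = (vnorm (R *\<^sub>v v))\<^sup>2"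
    using nonzero_gram_eigenvalue_rayleigh[OF assms] .
  have "0 < (vnorm v)\<^sup>2" using v vnorm_eq_0_iff[of v] vnorm_nonneg[of v] by auto
  moreover have "0 \<le> \<mu> * (vnorm v)\<^sup>2" using v(3) by simp
  ultimately have "0 \<le> \<mu>" by (simp add: zero_le_mult_iff)
  moreover have "\<mu> \<noteq> 0" using assms(2) unfolding nonzero_gram_eigenvalues_def by simp
  ultimately show ?thesis by simp
qed

lemma nonzero_gram_eigenvalue_le_1:
  assumes "R \<in> carrier_mat N n" "\<mu> \<in> nonzero_gram_eigenvalues R"
    and contr: "\<And>x. x \<in> carrier_vec n \<Longrightarrow> vnorm (R *\<^sub>v x) \<le> vnorm x"
  shows "\<mu> \<le> 1"
proof -
  obtain v where v: "v \<in> carrier_vec n" "v \<noteq> 0\<^sub>v n" "\<mu> * (vnorm v)\<^sup>2 = (vnorm (R *\<^sub>v v))\<^sup>2"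
    using nonzero_gram_eigenvalue_rayleigh[OF assms(1,2)] .
  have "0 < (vnorm v)\<^sup>2" using v vnorm_eq_0_iff[of v] vnorm_nonneg[of v] by auto
  moreover have "(vnorm (R *\<^sub>v v))\<^sup>2 \<le> (vnorm v)\<^sup>2"
    using contr[OF v(1)] vnorm_nonneg by (simp add: power_mono)
  ultimately show ?thesis using v(3) mult_le_cancel_right[of \<mu> "(vnorm v)\<^sup>2" 1] by simp
qed

lemma gram_eigenbasis:
  assumes R: "R \<in> carrier_mat N n"
  obtains U d where "unitary U n"
    and "\<And>i. i < n \<Longrightarrow> d i = 0 \<Longrightarrow> R *\<^sub>v col U i = 0\<^sub>v N"
    and "\<And>i. i < n \<Longrightarrow> d i \<noteq> 0 \<Longrightarrow> d i \<in> nonzero_gram_eigenvalues R"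
    and "\<And>x. x \<in> carrier_vec n \<Longrightarrow> (vnorm x)\<^sup>2 = (\<Sum>i<n. (cmod ((mat_adjoint U *\<^sub>v x) $ i))\<^sup>2)"
    and "\<And>x. x \<in> carrier_vec n \<Longrightarrow>
           (vnorm (R *\<^sub>v x))\<^sup>2 = (\<Sum>i<n. d i * (cmod ((mat_adjoint U *\<^sub>v x) $ i))\<^sup>2)"
proof -
  define H where "H = mat_adjoint R * R"
  have H: "H \<in> carrier_mat n n" unfolding H_def using R by auto
  have "mat_adjoint H = H"
    unfolding H_def by (simp add: mat_adjoint_mult[OF mat_adjoint_carrier[OF R] R])
  then obtain U d where U: "unitary U n" and HU: "H * U = U * real_diag_mat n d"
    using hermitian_spectral_decomposition[OF H] by blast
  have Uc: "U \<in> carrier_mat n n" using U by (rule unitary_carrier)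
  note coords = spectral_coordinates[OF U H HU]
  have norm_col: "d i = (vnorm (R *\<^sub>v col U i))\<^sup>2" if i: "i < n" for i
  proof -
    have "(H *\<^sub>v col U i) \<bullet>c col U i = complex_of_real (d i)"
      using unitary_orthonormal_cols[OF U i i] Uc i
      by (simp add: unitary_eigenvector_col[OF U H HU i] cscalar_prod_smult_left)
    then have "complex_of_real (d i) = complex_of_real ((vnorm (R *\<^sub>v col U i))\<^sup>2)"
      using gram_quadratic_form[OF R, of "col U i"] Uc i by (simp add: H_def)
    then show ?thesis by (simp only: of_real_eq_iff)
  qed
  show ?thesis
  proof (rule that[OF U])
    fix i assume "i < n" "d i = 0"
    then show "R *\<^sub>v col U i = 0\<^sub>v N"
      using norm_col vnorm_eq_0_iff[of "R *\<^sub>v col U i"] R by simp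
  next
    fix i assume "i < n" "d i \<noteq> 0"
    then show "d i \<in> nonzero_gram_eigenvalues R"
      using unitary_eigenvector_col[OF U H HU] unitary_col_nonzero[OF U] Uc H
      unfolding nonzero_gram_eigenvalues_def eigenvalue_def eigenvector_def H_def[symmetric]
      by (auto intro!: exI[of _ "col U i"])
  next
    fix x :: "complex vec" assume x: "x \<in> carrier_vec n"
    show "(vnorm x)\<^sup>2 = (\<Sum>i<n. (cmod ((mat_adjoint U *\<^sub>v x) $ i))\<^sup>2)"
      by (rule coords(1)[OF x])
    have "complex_of_real ((vnorm (R *\<^sub>v x))\<^sup>2)
        = complex_of_real (\<Sum>i<n. d i * (cmod ((mat_adjoint U *\<^sub>v x) $ i))\<^sup>2)"
      using gram_quadratic_form[OF R x] coords(2)[OF x] unfolding H_def by metis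
    then show "(vnorm (R *\<^sub>v x))\<^sup>2 = (\<Sum>i<n. d i * (cmod ((mat_adjoint U *\<^sub>v x) $ i))\<^sup>2)"
      by (simp only: of_real_eq_iff)
  qed
qed

lemma nonzero_gram_eigenvalues_finite:
  assumes R: "R \<in> carrier_mat N n"
  shows "finite (nonzero_gram_eigenvalues R)"
proof -
  define H where "H = mat_adjoint R * R"
  have H: "H \<in> carrier_mat n n" unfolding H_def using R by auto
  have "char_poly H \<noteq> 0" using degree_monic_char_poly[OF H] by auto
  then have "finite (Re ` {c. poly (char_poly H) c = 0})" by (simp add: poly_roots_finite)
  moreover have "nonzero_gram_eigenvalues R \<subseteq> Re ` {c. poly (char_poly H) c = 0}"
    unfolding nonzero_gram_eigenvalues_def H_def[symmetric] eigenvalue_root_char_poly[OF H]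
    by (auto intro: image_eqI[of _ Re "complex_of_real _"])
  ultimately show ?thesis by (rule finite_subset[rotated])
qed

lemma gram_lower_bound_on_kernel_complement:
  assumes R: "R \<in> carrier_mat N n" and x: "x \<in> carrier_vec n"
    and perp: "\<And>u. u \<in> carrier_vec n \<Longrightarrow> R *\<^sub>v u = 0\<^sub>v N \<Longrightarrow> x \<bullet>c u = 0"
  shows "nonzero_gram_eigenvalues R = {} \<Longrightarrow> x = 0\<^sub>v n"
    and "nonzero_gram_eigenvalues R \<noteq> {} \<Longrightarrow>
           Min (nonzero_gram_eigenvalues R) * (vnorm x)\<^sup>2 \<le> (vnorm (R *\<^sub>v x))\<^sup>2"
proof -
  let ?E = "nonzero_gram_eigenvalues R"
  obtain U d where U: "unitary U n"
    and ker: "\<And>i. i < n \<Longrightarrow> d i = 0 \<Longrightarrow> R *\<^sub>v col U i = 0\<^sub>v N"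
    and eig: "\<And>i. i < n \<Longrightarrow> d i \<noteq> 0 \<Longrightarrow> d i \<in> ?E"
    and norm: "\<And>x. x \<in> carrier_vec n \<Longrightarrow> (vnorm x)\<^sup>2 = (\<Sum>i<n. (cmod ((mat_adjoint U *\<^sub>v x) $ i))\<^sup>2)"
    and normR: "\<And>x. x \<in> carrier_vec n \<Longrightarrow>
           (vnorm (R *\<^sub>v x))\<^sup>2 = (\<Sum>i<n. d i * (cmod ((mat_adjoint U *\<^sub>v x) $ i))\<^sup>2)"
    using gram_eigenbasis[OF R] by blast
  have Uc: "U \<in> carrier_mat n n" using U by (rule unitary_carrier)
  have coord0: "(mat_adjoint U *\<^sub>v x) $ i = 0" if "i < n" "d i = 0" for i
    unfolding mat_adjoint_mult_vec_index[OF Uc x that(1)] using perp[OF _ ker[OF that]] Uc that by simp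
  show "x = 0\<^sub>v n" if "?E = {}"
  proof -
    have "\<forall>i<n. (mat_adjoint U *\<^sub>v x) $ i = 0" using coord0 eig that by blast
    then have "(vnorm x)\<^sup>2 = 0" unfolding norm[OF x] by simp
    then show ?thesis using vnorm_eq_0_iff[of x] x by simp
  qed
  assume "?E \<noteq> {}"
  have "Min ?E * (cmod ((mat_adjoint U *\<^sub>v x) $ i))\<^sup>2 \<le> d i * (cmod ((mat_adjoint U *\<^sub>v x) $ i))\<^sup>2"
    if "i < n" for i
  proof (cases "d i = 0")
    case False
    then have "Min ?E \<le> d i"
      using Min_le[OF nonzero_gram_eigenvalues_finite[OF R] eig[OF that False]] by simp
    then show ?thesis by (simp add: mult_right_mono)
  qed (use coord0 that in simp)
  then show "Min ?E * (vnorm x)\<^sup>2 \<le> (vnorm (R *\<^sub>v x))\<^sup>2"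
    unfolding norm[OF x] normR[OF x] sum_distrib_left by (intro sum_mono) auto
qed


section \<open>Affine iterations and geometric sums\<close>

lemma affine_iteration_norm_bound:
  fixes T :: "complex mat" and y :: "complex vec" and P :: "complex vec \<Rightarrow> bool"
  assumes T: "T \<in> carrier_mat n n" and y: "y \<in> carrier_vec n"
    and P0: "P (0\<^sub>v n)" and P_step: "\<And>x. x \<in> carrier_vec n \<Longrightarrow> P x \<Longrightarrow> P (T *\<^sub>v x + y)"
    and contr: "\<And>x. x \<in> carrier_vec n \<Longrightarrow> P x \<Longrightarrow> vnorm (T *\<^sub>v x) \<le> s * vnorm x"
    and s: "0 \<le> s"
  shows "vnorm (((\<lambda>x. T *\<^sub>v x + y) ^^ k) (0\<^sub>v n)) \<le> vnorm y * (\<Sum>j<k. s ^ j)"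
proof -
  have "((\<lambda>x. T *\<^sub>v x + y) ^^ k) (0\<^sub>v n) \<in> carrier_vec n \<and> P (((\<lambda>x. T *\<^sub>v x + y) ^^ k) (0\<^sub>v n))
      \<and> vnorm (((\<lambda>x. T *\<^sub>v x + y) ^^ k) (0\<^sub>v n)) \<le> vnorm y * (\<Sum>j<k. s ^ j)"
  proof (induction k)
    case 0
    show ?case using P0 vnorm_eq_0_iff[of "0\<^sub>v n"] by simp
  next
    case (Suc k)
    define x where "x = ((\<lambda>x. T *\<^sub>v x + y) ^^ k) (0\<^sub>v n)"
    have x: "x \<in> carrier_vec n" "P x" "vnorm x \<le> vnorm y * (\<Sum>j<k. s ^ j)"
      using Suc.IH unfolding x_def by auto
    have "vnorm (T *\<^sub>v x + y) \<le> vnorm (T *\<^sub>v x) + vnorm y"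
      using T x(1) y by (intro vnorm_triangle) simp
    also have "\<dots> \<le> s * (vnorm y * (\<Sum>j<k. s ^ j)) + vnorm y"
      using contr[OF x(1,2)] mult_left_mono[OF x(3) s] by linarith
    also have "\<dots> = vnorm y * (\<Sum>j<Suc k. s ^ j)"
      by (simp add: sum_distrib_left lessThan_Suc_eq_insert_0 sum.reindex algebra_simps)
    moreover have "T *\<^sub>v x + y \<in> carrier_vec n" using T x(1) y by simp
    ultimately show ?case using P_step[OF x(1,2)] unfolding x_def by simp
  qed
  then show ?thesis by blast
qed

lemma geometric_sum_le_linear:
  fixes s :: real
  assumes s: "0 \<le> s" "s \<le> 1" and k: "2 \<le> k"
  shows "(\<Sum>j<k. s ^ j) \<le> real k * (1 + s) / 2"
  using k
proof (induction k rule: dec_induct)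
  case base
  then show ?case by (simp add: numeral_2_eq_2)
next
  case (step k)
  have "s ^ k \<le> s ^ 1" using s step.hyps by (intro power_decreasing) auto
  then have "s ^ k \<le> (1 + s) / 2" using s by simp
  then show ?case using step.IH by (simp add: field_simps)
qed

lemma geometric_sum_le:
  fixes s :: real
  assumes s: "0 \<le> s" "s < 1"
  shows "(\<Sum>j<k. s ^ j) \<le> 1 / (1 - s)"
proof -
  have "(\<Sum>j<k. s ^ j) = (1 - s ^ k) / (1 - s)" using s sum_gp_strict[of s k] by simp
  also have "\<dots> \<le> 1 / (1 - s)" using s by (intro divide_right_mono) auto
  finally show ?thesis .
qed

lemma geometric_error_bounds:
  fixes \<sigma> \<delta> \<epsilon> :: real
  assumes \<sigma>: "0 < \<sigma>\<^sup>2" "\<sigma>\<^sup>2 \<le> 1" and \<delta>: "0 \<le> \<delta>"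
    and \<epsilon>: "\<epsilon> \<le> \<delta> * (\<Sum>j<k. sqrt (1 - \<sigma>\<^sup>2) ^ j)"
  shows "(2 \<le> k \<and> real k \<le> 2 / \<sigma>\<^sup>2 \<longrightarrow> \<epsilon> \<le> \<delta> * \<sigma>\<^sup>2 / (2 * (1 - sqrt (1 - \<sigma>\<^sup>2))) * real k)
       \<and> (real k > 2 / \<sigma>\<^sup>2 \<longrightarrow> \<epsilon> \<le> \<delta> / (1 - sqrt (1 - \<sigma>\<^sup>2)))"
proof -
  define s where "s = sqrt (1 - \<sigma>\<^sup>2)"
  have s: "0 \<le> s" "s < 1" unfolding s_def using \<sigma> by auto
  have \<sigma>_s: "\<sigma>\<^sup>2 = (1 - s) * (1 + s)" unfolding s_def using \<sigma> by (simp add: algebra_simps)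
  have linear: "\<epsilon> \<le> \<delta> * \<sigma>\<^sup>2 / (2 * (1 - s)) * real k" if "2 \<le> k"
  proof -
    have "\<epsilon> \<le> \<delta> * (real k * (1 + s) / 2)"
      using order_trans[OF \<epsilon>[folded s_def]
          mult_left_mono[OF geometric_sum_le_linear[OF s(1) less_imp_le[OF s(2)] that] \<delta>]] .
    also have "\<dots> = \<delta> * \<sigma>\<^sup>2 / (2 * (1 - s)) * real k"
      unfolding \<sigma>_s using s by (simp add: field_simps)
    finally show ?thesis .
  qed
  have "\<epsilon> \<le> \<delta> * (1 / (1 - s))"
    using order_trans[OF \<epsilon>[folded s_def] mult_left_mono[OF geometric_sum_le[OF s] \<delta>]] .
  then show ?thesis using linear unfolding s_def by simp
qed

section \<open>The regularized block Kaczmarz iteration\<close>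

text \<open>The blocks are the level sets of \<open>blk\<close> (row \<open>a\<close> lies in block \<open>blk a\<close>); \<open>D g\<close> is the
  paper's \<open>D\<^sub>g\<close>, so \<open>D 0\<close> is the block diagonal part of \<open>G\<close>.\<close>

locale block_kaczmarz =
  fixes A :: "complex mat" and blk :: "nat \<Rightarrow> nat" and N n :: nat and \<gamma> :: real
  assumes A: "A \<in> carrier_mat N n" and \<gamma>_pos: "0 < \<gamma>"
begin

definition "G = A * mat_adjoint A"

definition "D g = mat N N (\<lambda>(a, b). if blk a = blk b
   then (if a = b then complex_of_real g else 0) + G $$ (a, b) else 0)"

definition "L = mat N N (\<lambda>(a, b). if blk a > blk b then G $$ (a, b) else 0)"

definition "K = D \<gamma> + L"

definition "M = the (mat_inverse K)"

definition "S = hpd_sqrt (D (2 * \<gamma>))"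

definition "R = S * M * A"

definition "T = 1\<^sub>m n - mat_adjoint A * M * A"

definition "iterate p k = ((\<lambda>q. T *\<^sub>v q + (mat_adjoint A * M) *\<^sub>v p) ^^ k) (0\<^sub>v n)"

lemma A_adjoint_carrier: "mat_adjoint A \<in> carrier_mat n N"
  using A by auto

lemma G_carrier: "G \<in> carrier_mat N N"
  unfolding G_def using A by auto

lemma D_dim [simp]: "dim_row (D g) = N" "dim_col (D g) = N"
  unfolding D_def by simp_all

lemma D_carrier: "D g \<in> carrier_mat N N"
  unfolding D_def by simp

lemma L_carrier: "L \<in> carrier_mat N N"
  unfolding L_def by simp

lemma K_carrier: "K \<in> carrier_mat N N"
  unfolding K_def using D_carrier L_carrier by simp

lemma G_index_cnj:
  assumes "a < N" "b < N"
  shows "G $$ (b, a) = cnj (G $$ (a, b))"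
proof -
  have "mat_adjoint G = G"
    unfolding G_def by (simp add: mat_adjoint_mult[OF A A_adjoint_carrier])
  then show ?thesis using G_carrier assms mat_adjoint_index[of a G b] by simp
qed

lemma G_quadratic_form:
  assumes w: "w \<in> carrier_vec N"
  shows "w \<bullet>c (G *\<^sub>v w) = complex_of_real ((vnorm (mat_adjoint A *\<^sub>v w))\<^sup>2)"
proof -
  have "w \<bullet>c (G *\<^sub>v w) = cnj ((A *\<^sub>v (mat_adjoint A *\<^sub>v w)) \<bullet>c w)"
    unfolding G_def using A w
    by (simp add: assoc_mult_mat_vec[OF A A_adjoint_carrier w] cscalar_prod_swap[of w])
  then show ?thesis
    using cscalar_prod_adjoint[OF A mult_mat_vec_carrier[OF A_adjoint_carrier w] w]
    by (simp add: cscalar_prod_self)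
qed

lemma D_mult_vec:
  assumes v: "v \<in> carrier_vec N"
  shows "D g *\<^sub>v v = complex_of_real g \<cdot>\<^sub>v v + D 0 *\<^sub>v v"
proof (rule eq_vecI)
  fix a assume "a < dim_vec (complex_of_real g \<cdot>\<^sub>v v + D 0 *\<^sub>v v)"
  then have a: "a < N" by (simp add: D_def)
  have entry: "D g $$ (a, b) * v $ b = (if b = a then complex_of_real g * v $ b else 0) + D 0 $$ (a, b) * v $ b"
    if "b \<in> {0..<N}" for b
    using a that by (simp add: D_def distrib_right)
  have "(D g *\<^sub>v v) $ a = (\<Sum>b = 0..<N. D g $$ (a, b) * v $ b)"
    using a v D_carrier by (simp add: scalar_prod_def)
  also have "\<dots> = (\<Sum>b = 0..<N. (if b = a then complex_of_real g * v $ b else 0) + D 0 $$ (a, b) * v $ b)"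
    by (rule sum.cong[OF refl entry])
  also have "\<dots> = complex_of_real g * v $ a + (\<Sum>b = 0..<N. D 0 $$ (a, b) * v $ b)"
    using a by (simp add: sum.distrib)
  also have "\<dots> = (complex_of_real g \<cdot>\<^sub>v v + D 0 *\<^sub>v v) $ a"
    using a v D_carrier by (simp add: scalar_prod_def)
  finally show "(D g *\<^sub>v v) $ a = (complex_of_real g \<cdot>\<^sub>v v + D 0 *\<^sub>v v) $ a" .
qed (use D_carrier in simp)

lemma D_hermitian: "mat_adjoint (D g) = D g"
proof (rule eq_matI)
  fix a b assume "a < dim_row (D g)" "b < dim_col (D g)"
  then show "mat_adjoint (D g) $$ (a, b) = D g $$ (a, b)"
    using G_index_cnj[of a b] by (auto simp: D_def)
qed (simp_all add: D_def)

text \<open>Writing \<open>G = D\<^sub>0 + L + L\<^sup>*\<close> shows \<open>K + K\<^sup>* - G = 2 D\<^sub>\<gamma> - D\<^sub>0 = D\<^sub>2\<^sub>\<gamma>\<close>.\<close>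

lemma K_plus_adjoint_minus_G: "K + mat_adjoint K - G = D (2 * \<gamma>)"
proof (rule eq_matI)
  fix a b assume "a < dim_row (D (2 * \<gamma>))" "b < dim_col (D (2 * \<gamma>))"
  then have a: "a < N" and b: "b < N" by (simp_all add: D_def)
  show "(K + mat_adjoint K - G) $$ (a, b) = D (2 * \<gamma>) $$ (a, b)"
    using a b K_carrier G_carrier D_carrier L_carrier G_index_cnj[OF a b]
    unfolding K_def by (auto simp: D_def L_def)
qed (use K_carrier G_carrier in \<open>auto simp: D_def\<close>)

lemma D0_quadratic_form_nonneg:
  assumes v: "v \<in> carrier_vec N"
  shows "0 \<le> Re (v \<bullet>c (D 0 *\<^sub>v v))"
proof -
  define W where "W c = vec N (\<lambda>a. if blk a = c then v $ a else 0)" for c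
  define F where "F a c = v $ a * cnj (\<Sum>b = 0..<N. if blk b = c then G $$ (a, b) * v $ b else 0)" for a c
  have W: "W c \<in> carrier_vec N" for c unfolding W_def by simp
  have block: "W c \<bullet>c (G *\<^sub>v W c) = (\<Sum>a = 0..<N. if c = blk a then F a c else 0)" for c
  proof -
    have "(G *\<^sub>v W c) $ a = (\<Sum>b = 0..<N. if blk b = c then G $$ (a, b) * v $ b else 0)" if "a < N" for a
      using that G_carrier by (auto simp: scalar_prod_def W_def intro: sum.cong)
    then show ?thesis using G_carrier by (auto simp: cscalar_prod_sum W_def F_def intro: sum.cong)
  qed
  have "v \<bullet>c (D 0 *\<^sub>v v) = (\<Sum>a = 0..<N. F a (blk a))"
    using v by (auto simp: cscalar_prod_sum D_def F_def scalar_prod_def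
        intro!: sum.cong arg_cong[where f = cnj])
  also have "\<dots> = (\<Sum>a = 0..<N. \<Sum>c \<in> blk ` {0..<N}. if c = blk a then F a c else 0)"
    by (rule sum.cong) auto
  also have "\<dots> = (\<Sum>c \<in> blk ` {0..<N}. W c \<bullet>c (G *\<^sub>v W c))"
    unfolding block by (rule sum.swap)
  finally have "Re (v \<bullet>c (D 0 *\<^sub>v v)) = (\<Sum>c \<in> blk ` {0..<N}. (vnorm (mat_adjoint A *\<^sub>v W c))\<^sup>2)"
    by (simp add: G_quadratic_form[OF W])
  also have "\<dots> \<ge> 0" by (rule sum_nonneg) simp
  finally show ?thesis .
qed

lemma D_quadratic_form_ge:
  assumes v: "v \<in> carrier_vec N"
  shows "g * (vnorm v)\<^sup>2 \<le> Re (v \<bullet>c (D g *\<^sub>v v))"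
proof -
  have "v \<bullet>c (D g *\<^sub>v v) = complex_of_real (g * (vnorm v)\<^sup>2) + v \<bullet>c (D 0 *\<^sub>v v)"
    unfolding D_mult_vec[OF v, of g] using v D_carrier
    by (simp add: cscalar_prod_add_right cscalar_prod_smult_right cscalar_prod_self)
  then show ?thesis using D0_quadratic_form_nonneg[OF v] by simp
qed

lemma D2_pos_def:
  assumes "v \<in> carrier_vec N" "v \<noteq> 0\<^sub>v N"
  shows "0 < Re (v \<bullet>c (D (2 * \<gamma>) *\<^sub>v v))"
proof -
  have "0 < (vnorm v)\<^sup>2" using assms vnorm_eq_0_iff[of v] vnorm_nonneg[of v] by auto
  then show ?thesis
    using D_quadratic_form_ge[OF assms(1), of "2 * \<gamma>"] \<gamma>_pos by (smt (verit) mult_pos_pos)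
qed

lemma D2_quadratic_form:
  assumes z: "z \<in> carrier_vec N"
  shows "z \<bullet>c (D (2 * \<gamma>) *\<^sub>v z) = z \<bullet>c (K *\<^sub>v z) + cnj (z \<bullet>c (K *\<^sub>v z)) - z \<bullet>c (G *\<^sub>v z)"
proof -
  have K': "mat_adjoint K \<in> carrier_mat N N" using K_carrier by auto
  have "D (2 * \<gamma>) *\<^sub>v z = K *\<^sub>v z + mat_adjoint K *\<^sub>v z - G *\<^sub>v z"
    unfolding K_plus_adjoint_minus_G[symmetric]
      minus_mult_distrib_mat_vec[OF add_carrier_mat[OF K'] G_carrier z]
      add_mult_distrib_mat_vec[OF K_carrier K' z] ..
  moreover have "z \<bullet>c (mat_adjoint K *\<^sub>v z) = cnj (z \<bullet>c (K *\<^sub>v z))"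
    using cscalar_prod_adjoint[OF K_carrier z z] K_carrier z
    by (simp add: cscalar_prod_swap[of "K *\<^sub>v z" z])
  ultimately show ?thesis
    using z K_carrier K' G_carrier by (simp add: cscalar_prod_minus_right cscalar_prod_add_right)
qed

lemma K_injective:
  assumes v: "v \<in> carrier_vec N" and Kv: "K *\<^sub>v v = 0\<^sub>v N"
  shows "v = 0\<^sub>v N"
proof (rule ccontr)
  assume "v \<noteq> 0\<^sub>v N"
  moreover have "Re (v \<bullet>c (D (2 * \<gamma>) *\<^sub>v v)) = - (vnorm (mat_adjoint A *\<^sub>v v))\<^sup>2"
    using D2_quadratic_form[OF v] G_quadratic_form[OF v] Kv v by simp
  ultimately show False using D2_pos_def[OF v] by (smt (verit) zero_le_power2)
qed

lemma M_inverse: "M \<in> carrier_mat N N" "K * M = 1\<^sub>m N"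
proof -
  have "det K \<noteq> 0" using K_injective det_0_iff_vec_prod_zero[OF K_carrier] by auto
  then have "K \<in> Units (ring_mat TYPE(complex) N ())"
    by (rule det_non_zero_imp_unit[OF K_carrier])
  moreover have "K \<notin> Units (ring_mat TYPE(complex) N ())" if "mat_inverse K = None"
    using that by (rule mat_inverse(1)[OF K_carrier])
  ultimately have "mat_inverse K \<noteq> None" by blast
  then obtain M' where "mat_inverse K = Some M'" by blast
  then show "M \<in> carrier_mat N N" "K * M = 1\<^sub>m N"
    using mat_inverse(2)[OF K_carrier] unfolding M_def by auto
qed

lemma S_hpd_sqrt: "is_hpd_sqrt (D (2 * \<gamma>)) S"
  unfolding S_def using D_carrier D_hermitian D2_pos_def by (rule is_hpd_sqrt_hpd_sqrt)

lemma S_carrier: "S \<in> carrier_mat N N"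
  using S_hpd_sqrt unfolding is_hpd_sqrt_def by (simp add: D_def)

lemma R_carrier: "R \<in> carrier_mat N n"
  unfolding R_def using S_carrier M_inverse(1) A by simp

lemma T_carrier: "T \<in> carrier_mat n n"
  unfolding T_def using M_inverse(1) A A_adjoint_carrier by auto

lemma T_mult_vec:
  assumes x: "x \<in> carrier_vec n"
  shows "T *\<^sub>v x = x - mat_adjoint A *\<^sub>v (M *\<^sub>v (A *\<^sub>v x))"
proof -
  have AM: "mat_adjoint A * M \<in> carrier_mat n N" using A_adjoint_carrier M_inverse(1) by simp
  have "T *\<^sub>v x = x - ((mat_adjoint A * M) * A) *\<^sub>v x"
    unfolding T_def using x AM A by (simp add: minus_mult_distrib_mat_vec[of _ n n])
  also have "((mat_adjoint A * M) * A) *\<^sub>v x = mat_adjoint A *\<^sub>v (M *\<^sub>v (A *\<^sub>v x))"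
    using x A M_inverse(1) by (simp add: assoc_mult_mat_vec[OF AM A x]
        assoc_mult_mat_vec[OF A_adjoint_carrier M_inverse(1)])
  finally show ?thesis .
qed

lemma R_mult_vec:
  assumes x: "x \<in> carrier_vec n"
  shows "R *\<^sub>v x = S *\<^sub>v (M *\<^sub>v (A *\<^sub>v x))"
proof -
  have SM: "S * M \<in> carrier_mat N N" using S_carrier M_inverse(1) by simp
  show ?thesis
    unfolding R_def using x A by (simp add: assoc_mult_mat_vec[OF SM A x]
        assoc_mult_mat_vec[OF S_carrier M_inverse(1)])
qed

text \<open>With \<open>z = M A x\<close> one has \<open>A x = K z\<close>, so
  \<open>\<parallel>T x\<parallel>\<^sup>2 = \<parallel>x\<parallel>\<^sup>2 - 2 Re \<langle>z, K z\<rangle> + \<langle>z, G z\<rangle>\<close> while \<open>\<parallel>R x\<parallel>\<^sup>2 = \<langle>z, D\<^sub>2\<^sub>\<gamma> z\<rangle>\<close>.\<close>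

lemma norm_T_squared:
  assumes x: "x \<in> carrier_vec n"
  shows "(vnorm (T *\<^sub>v x))\<^sup>2 = (vnorm x)\<^sup>2 - (vnorm (R *\<^sub>v x))\<^sup>2"
proof -
  define z where "z = M *\<^sub>v (A *\<^sub>v x)"
  define y where "y = mat_adjoint A *\<^sub>v z"
  define q where "q = z \<bullet>c (K *\<^sub>v z)"
  have z: "z \<in> carrier_vec N" unfolding z_def using M_inverse(1) A x by simp
  have y: "y \<in> carrier_vec n" unfolding y_def using A_adjoint_carrier z by simp
  have Kz: "K *\<^sub>v z = A *\<^sub>v x"
    unfolding z_def using assoc_mult_mat_vec[OF K_carrier M_inverse(1), of "A *\<^sub>v x"] M_inverse(2) A x
    by simp
  have yx: "y \<bullet>c x = q"
    unfolding y_def q_def Kz using cscalar_prod_adjoint[OF A_adjoint_carrier z x] by simp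
  have xy: "x \<bullet>c y = cnj q"
    using cscalar_prod_swap[of x y] x y yx by simp
  have yy: "y \<bullet>c y = z \<bullet>c (G *\<^sub>v z)"
    unfolding y_def G_def assoc_mult_mat_vec[OF A A_adjoint_carrier z]
    using cscalar_prod_adjoint[OF A_adjoint_carrier z y[unfolded y_def]] by simp
  have Rx: "(R *\<^sub>v x) \<bullet>c (R *\<^sub>v x) = z \<bullet>c (D (2 * \<gamma>) *\<^sub>v z)"
  proof -
    have "mat_adjoint S = S" "S * S = D (2 * \<gamma>)" using S_hpd_sqrt unfolding is_hpd_sqrt_def by auto
    then show ?thesis
      unfolding R_mult_vec[OF x] z_def[symmetric]
      using cscalar_prod_adjoint[OF S_carrier z, of "S *\<^sub>v z"] S_carrier z
      by (simp add: assoc_mult_mat_vec[OF S_carrier S_carrier z, symmetric])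
  qed
  have "(T *\<^sub>v x) \<bullet>c (T *\<^sub>v x) = x \<bullet>c x - (R *\<^sub>v x) \<bullet>c (R *\<^sub>v x)"
    unfolding T_mult_vec[OF x] z_def[symmetric] y_def[symmetric] cscalar_prod_diff_self[OF x y]
      xy yx yy Rx D2_quadratic_form[OF z] q_def[symmetric] by simp
  then have "complex_of_real ((vnorm (T *\<^sub>v x))\<^sup>2) = complex_of_real ((vnorm x)\<^sup>2 - (vnorm (R *\<^sub>v x))\<^sup>2)"
    by (simp add: cscalar_prod_self)
  then show ?thesis by (simp only: of_real_eq_iff)
qed

lemma R_kernel:
  assumes x: "x \<in> carrier_vec n" and Rx: "R *\<^sub>v x = 0\<^sub>v N"
  shows "A *\<^sub>v x = 0\<^sub>v N"
proof -
  define z where "z = M *\<^sub>v (A *\<^sub>v x)"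
  have z: "z \<in> carrier_vec N" unfolding z_def using M_inverse(1) A x by simp
  have Sz: "S *\<^sub>v z = 0\<^sub>v N" using Rx unfolding R_mult_vec[OF x] z_def .
  have "z = 0\<^sub>v N"
  proof (rule ccontr)
    assume "z \<noteq> 0\<^sub>v N"
    then have "0 < Re (z \<bullet>c (S *\<^sub>v z))" using S_hpd_sqrt z unfolding is_hpd_sqrt_def by simp
    then show False unfolding Sz using z by simp
  qed
  moreover have "K *\<^sub>v z = A *\<^sub>v x"
    unfolding z_def using assoc_mult_mat_vec[OF K_carrier M_inverse(1), of "A *\<^sub>v x"] M_inverse(2) A x
    by simp
  ultimately show ?thesis using K_carrier by simp
qed

definition in_adjoint_range :: "complex vec \<Rightarrow> bool" where
  "in_adjoint_range x \<longleftrightarrow> (\<exists>w \<in> carrier_vec N. x = mat_adjoint A *\<^sub>v w)"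

lemma adjoint_range_orthogonal_kernel:
  assumes "in_adjoint_range x" and u: "u \<in> carrier_vec n" "R *\<^sub>v u = 0\<^sub>v N"
  shows "x \<bullet>c u = 0"
proof -
  obtain w where w: "w \<in> carrier_vec N" "x = mat_adjoint A *\<^sub>v w"
    using assms(1) unfolding in_adjoint_range_def by blast
  have "x \<bullet>c u = w \<bullet>c (A *\<^sub>v u)"
    unfolding w(2) using cscalar_prod_adjoint[OF A_adjoint_carrier w(1) u(1)] by simp
  also have "\<dots> = 0" unfolding R_kernel[OF u] using w(1) by simp
  finally show ?thesis .
qed

lemma adjoint_range_affine_step:
  assumes "in_adjoint_range x" and p: "p \<in> carrier_vec N"
  shows "in_adjoint_range (T *\<^sub>v x + (mat_adjoint A * M) *\<^sub>v p)"
proof -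
  obtain w where w: "w \<in> carrier_vec N" "x = mat_adjoint A *\<^sub>v w"
    using assms(1) unfolding in_adjoint_range_def by blast
  define u where "u = M *\<^sub>v (A *\<^sub>v x)"
  have x: "x \<in> carrier_vec n" using w A_adjoint_carrier by simp
  have u: "u \<in> carrier_vec N" unfolding u_def using M_inverse(1) A x by simp
  have Mp: "M *\<^sub>v p \<in> carrier_vec N" using M_inverse(1) p by simp
  have "T *\<^sub>v x + (mat_adjoint A * M) *\<^sub>v p
      = (x - mat_adjoint A *\<^sub>v u) + mat_adjoint A *\<^sub>v (M *\<^sub>v p)"
    unfolding T_mult_vec[OF x] u_def[symmetric] assoc_mult_mat_vec[OF A_adjoint_carrier M_inverse(1) p] ..
  also have "\<dots> = mat_adjoint A *\<^sub>v (w - u + M *\<^sub>v p)"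
    unfolding w(2) using w(1) u Mp
    by (simp add: mult_add_distrib_mat_vec[OF A_adjoint_carrier] mult_minus_distrib_mat_vec[OF A_adjoint_carrier])
  finally show ?thesis
    unfolding in_adjoint_range_def using w(1) u Mp by (intro bexI[of _ "w - u + M *\<^sub>v p"]) simp_all
qed

lemma iterate_Suc: "iterate p (Suc k) = T *\<^sub>v iterate p k + (mat_adjoint A * M) *\<^sub>v p"
  by (simp add: iterate_def)

lemma iterate_carrier:
  assumes "p \<in> carrier_vec N"
  shows "iterate p k \<in> carrier_vec n"
proof (induction k)
  case 0
  then show ?case by (simp add: iterate_def)
next
  case (Suc k)
  have "(mat_adjoint A * M) *\<^sub>v p \<in> carrier_vec n"
    using A_adjoint_carrier M_inverse(1) assms by simp
  then show ?case unfolding iterate_Suc using Suc.IH T_carrier by simp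
qed

lemma iterate_diff:
  assumes p: "p \<in> carrier_vec N" and pt: "pt \<in> carrier_vec N"
  shows "iterate pt k - iterate p k
    = ((\<lambda>x. T *\<^sub>v x + (mat_adjoint A * M) *\<^sub>v (pt - p)) ^^ k) (0\<^sub>v n)"
proof (induction k)
  case 0
  then show ?case by (simp add: iterate_def)
next
  case (Suc k)
  have AM: "mat_adjoint A * M \<in> carrier_mat n N" using A_adjoint_carrier M_inverse(1) by simp
  have "(T *\<^sub>v iterate pt k + (mat_adjoint A * M) *\<^sub>v pt) - (T *\<^sub>v iterate p k + (mat_adjoint A * M) *\<^sub>v p)
      = (T *\<^sub>v iterate pt k - T *\<^sub>v iterate p k) + ((mat_adjoint A * M) *\<^sub>v pt - (mat_adjoint A * M) *\<^sub>v p)"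
    by (rule eq_vecI) (use T_carrier AM in auto)
  also have "\<dots> = T *\<^sub>v (iterate pt k - iterate p k) + (mat_adjoint A * M) *\<^sub>v (pt - p)"
    by (simp add: mult_minus_distrib_mat_vec[OF T_carrier iterate_carrier[OF pt] iterate_carrier[OF p]]
        mult_minus_distrib_mat_vec[OF AM pt p])
  finally show ?case unfolding iterate_Suc Suc.IH by simp
qed

lemma T_nonexpansive:
  assumes "x \<in> carrier_vec n"
  shows "vnorm (T *\<^sub>v x) \<le> vnorm x"
proof -
  have "(vnorm (T *\<^sub>v x))\<^sup>2 \<le> (vnorm x)\<^sup>2"
    using norm_T_squared[OF assms] zero_le_power2[of "vnorm (R *\<^sub>v x)"] by linarith
  then show ?thesis using vnorm_nonneg by (rule power2_le_imp_le)
qed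

lemma R_nonexpansive:
  assumes "x \<in> carrier_vec n"
  shows "vnorm (R *\<^sub>v x) \<le> vnorm x"
proof -
  have "(vnorm (R *\<^sub>v x))\<^sup>2 \<le> (vnorm x)\<^sup>2"
    using norm_T_squared[OF assms] zero_le_power2[of "vnorm (T *\<^sub>v x)"] by linarith
  then show ?thesis using vnorm_nonneg by (rule power2_le_imp_le)
qed

lemma T_contraction_on_adjoint_range:
  assumes x: "x \<in> carrier_vec n" "in_adjoint_range x"
    and E: "nonzero_gram_eigenvalues R \<noteq> {}"
  shows "vnorm (T *\<^sub>v x) \<le> sqrt (1 - Min (nonzero_gram_eigenvalues R)) * vnorm x"
proof -
  let ?m = "Min (nonzero_gram_eigenvalues R)"
  have m: "?m \<in> nonzero_gram_eigenvalues R"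
    using Min_in[OF nonzero_gram_eigenvalues_finite[OF R_carrier] E] .
  have "?m \<le> 1"
    by (rule nonzero_gram_eigenvalue_le_1[OF R_carrier m R_nonexpansive])
  have "?m * (vnorm x)\<^sup>2 \<le> (vnorm (R *\<^sub>v x))\<^sup>2"
    using gram_lower_bound_on_kernel_complement(2)[OF R_carrier x(1)
        adjoint_range_orthogonal_kernel[OF x(2)] E] .
  moreover have "(1 - ?m) * (vnorm x)\<^sup>2 = (vnorm x)\<^sup>2 - ?m * (vnorm x)\<^sup>2"
    by (simp add: left_diff_distrib)
  ultimately have "(vnorm (T *\<^sub>v x))\<^sup>2 \<le> (1 - ?m) * (vnorm x)\<^sup>2"
    using norm_T_squared[OF x(1)] by linarith
  also have "\<dots> = (sqrt (1 - ?m) * vnorm x)\<^sup>2"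
    using \<open>?m \<le> 1\<close> by (simp add: power_mult_distrib)
  finally show ?thesis
    by (rule power2_le_imp_le) (use \<open>?m \<le> 1\<close> vnorm_nonneg[of x] in simp_all)
qed

lemma iterate_error_le_geometric_sum:
  assumes p: "p \<in> carrier_vec N" and pt: "pt \<in> carrier_vec N"
    and s: "0 \<le> s"
    and contr: "\<And>x. x \<in> carrier_vec n \<Longrightarrow> in_adjoint_range x \<Longrightarrow> vnorm (T *\<^sub>v x) \<le> s * vnorm x"
  shows "vnorm (iterate pt k - iterate p k)
    \<le> vnorm ((mat_adjoint A * M) *\<^sub>v (pt - p)) * (\<Sum>j<k. s ^ j)"
proof -
  have range0: "in_adjoint_range (0\<^sub>v n)"
    unfolding in_adjoint_range_def using A_adjoint_carrier by (intro bexI[of _ "0\<^sub>v N"]) simp_all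
  have d: "pt - p \<in> carrier_vec N" by (rule minus_carrier_vec[OF pt p])
  have y: "(mat_adjoint A * M) *\<^sub>v (pt - p) \<in> carrier_vec n"
    using A_adjoint_carrier M_inverse(1) d by simp
  show ?thesis
    unfolding iterate_diff[OF p pt]
    by (rule affine_iteration_norm_bound[OF T_carrier y range0 adjoint_range_affine_step[OF _ d] contr s])
qed

theorem iterate_error_bound:
  fixes k :: nat
  assumes p: "p \<in> carrier_vec N" and pt: "pt \<in> carrier_vec N"
  defines "\<sigma> \<equiv> min_sing_val R" and "\<delta> \<equiv> vnorm ((mat_adjoint A * M) *\<^sub>v (pt - p))"
    and "e \<equiv> iterate pt k - iterate p k"
  shows "(2 \<le> k \<and> real k \<le> 2 / \<sigma>\<^sup>2 \<longrightarrow>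
            vnorm e \<le> \<delta> * \<sigma>\<^sup>2 / (2 * (1 - sqrt (1 - \<sigma>\<^sup>2))) * real k)
       \<and> (real k > 2 / \<sigma>\<^sup>2 \<longrightarrow> vnorm e \<le> \<delta> / (1 - sqrt (1 - \<sigma>\<^sup>2)))"
proof (cases "nonzero_gram_eigenvalues R = {}")
  case True
  \<comment> \<open>Then \<open>\<sigma> = sqrt (Min {})\<close> is unspecified, but the range of \<open>A\<^sup>*\<close> is trivial, so \<open>\<delta> = 0\<close>.\<close>
  define y where "y = (mat_adjoint A * M) *\<^sub>v (pt - p)"
  have d: "pt - p \<in> carrier_vec N" by (rule minus_carrier_vec[OF pt p])
  have "in_adjoint_range y"
    unfolding y_def in_adjoint_range_def using M_inverse(1) d
    by (intro bexI[of _ "M *\<^sub>v (pt - p)"] assoc_mult_mat_vec[OF A_adjoint_carrier M_inverse(1) d]) simp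
  moreover have "y \<in> carrier_vec n" unfolding y_def using A_adjoint_carrier M_inverse(1) d by simp
  ultimately have "y = 0\<^sub>v n"
    using gram_lower_bound_on_kernel_complement(1)[OF R_carrier _ adjoint_range_orthogonal_kernel True]
    by blast
  then have "\<delta> = 0" unfolding \<delta>_def y_def[symmetric] by (simp add: vnorm_eq_0_iff)
  moreover have "vnorm e \<le> \<delta> * (\<Sum>j<k. 1 ^ j)"
    unfolding e_def \<delta>_def
    by (rule iterate_error_le_geometric_sum[OF p pt]) (simp_all add: T_nonexpansive)
  ultimately show ?thesis using vnorm_nonneg[of e] by simp
next
  case False
  let ?m = "Min (nonzero_gram_eigenvalues R)"
  have m: "?m \<in> nonzero_gram_eigenvalues R"
    using Min_in[OF nonzero_gram_eigenvalues_finite[OF R_carrier] False] .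
  have m_pos: "0 < ?m" by (rule nonzero_gram_eigenvalue_pos[OF R_carrier m])
  have m_le: "?m \<le> 1" by (rule nonzero_gram_eigenvalue_le_1[OF R_carrier m R_nonexpansive])
  have \<sigma>: "\<sigma>\<^sup>2 = ?m" unfolding \<sigma>_def min_sing_val_eq using m_pos by simp
  show ?thesis
  proof (rule geometric_error_bounds)
    show "0 < \<sigma>\<^sup>2" "\<sigma>\<^sup>2 \<le> 1" unfolding \<sigma> using m_pos m_le by simp_all
    show "0 \<le> \<delta>" unfolding \<delta>_def by (rule vnorm_nonneg)
    show "vnorm e \<le> \<delta> * (\<Sum>j<k. sqrt (1 - \<sigma>\<^sup>2) ^ j)"
      unfolding e_def \<delta>_def \<sigma>
      by (rule iterate_error_le_geometric_sum[OF p pt _ T_contraction_on_adjoint_range[OF _ _ False]])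
        (use m_le in simp)
  qed
qed

end

lemma stack_blocks_carrier:
  assumes "\<forall>Aj \<in> set As. dim_col Aj = n"
  shows "stack_blocks As n \<in> carrier_mat (sum_list (map dim_row As)) n"
  using assms
proof (induction As)
  case Nil
  then show ?case by (simp add: stack_blocks_def)
next
  case (Cons B Bs)
  have B: "B \<in> carrier_mat (dim_row B) n" using Cons.prems by (intro carrier_matI) auto
  have "stack_blocks (B # Bs) n = B @\<^sub>r stack_blocks Bs n" by (simp add: stack_blocks_def)
  then show ?case using carrier_append_rows[OF B Cons.IH] Cons.prems by simp
qed

theorem corollary3p3:
  fixes As :: "complex mat list" and n :: nat and \<gamma> :: real
    and p pt :: "complex vec" and k :: nat
  defines "A \<equiv> stack_blocks As n"
    and "N \<equiv> sum_list (map dim_row As)"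
    and "\<sigma> \<equiv> sigma As n \<gamma>"
    and "\<delta> \<equiv> vnorm (mat_adjoint (stack_blocks As n) * M_mat As n \<gamma> *\<^sub>v (pt - p))"
    and "e \<equiv> iterate_q As n \<gamma> pt k - iterate_q As n \<gamma> p k"
  assumes "As \<noteq> []"
    and "\<forall>Aj \<in> set As. Aj \<in> carrier_mat (dim_row Aj) n \<and> 0 < dim_row Aj"
    and "vec_space.rank N A = N"
    and "\<gamma> > 0"
    and "p \<in> carrier_vec N" and "pt \<in> carrier_vec N"
  shows "(2 \<le> k \<and> real k \<le> 2 / \<sigma>\<^sup>2 \<longrightarrow>
            vnorm e \<le> \<delta> * \<sigma>\<^sup>2 / (2 * (1 - sqrt (1 - \<sigma>\<^sup>2))) * real k)
       \<and> (real k > 2 / \<sigma>\<^sup>2 \<longrightarrow> vnorm e \<le> \<delta> / (1 - sqrt (1 - \<sigma>\<^sup>2)))"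
proof -
  have A: "A \<in> carrier_mat N n"
    using stack_blocks_carrier[of As n] assms(7) unfolding A_def N_def by auto
  interpret block_kaczmarz A "blk_of As" N n \<gamma>
    using A \<open>\<gamma> > 0\<close> by unfold_locales
  have dim: "dim_row A = N" using A by simp
  have D: "D_mat As n g = D g" for g
    unfolding D_mat_def D_def G_def Let_def A_def[symmetric] dim ..
  have M: "M_mat As n \<gamma> = M"
    unfolding M_mat_def M_def K_def D L_mat_def L_def G_def Let_def A_def[symmetric] dim ..
  have \<sigma>: "\<sigma> = min_sing_val R"
    unfolding \<sigma>_def sigma_def R_mat_def R_def S_def D M A_def[symmetric] ..
  have iterate: "iterate_q As n \<gamma> q j = iterate q j" for q j
    unfolding iterate_q_def iterate_def T_def Let_def M A_def[symmetric] ..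
  show ?thesis
    using iterate_error_bound[OF assms(10,11), of k]
    unfolding \<sigma> \<delta>_def e_def iterate M A_def[symmetric] .
qed

end
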